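(* Consider the NSGA-II with population size $N\ge 4(n+1)$ optimizing \textsc{OneMinMax}, where the offspring population is generated in one of the following four ways: applying one-bit mutation once to each individual of $P_t$; applying standard bit-wise mutation once to each individual of $P_t$; $N$ times independently choosing a parent uniformly at random from $P_t$ and applying one-bit mutation to it; $N$ times independently choosing a parent uniformly at random from $P_t$ and applying standard bit-wise mutation to it. Let $T$ be the number of iterations until $f(P_T)$ contains the whole Pareto front. Then $E[T]\le \frac{2e^2}{e-1}n(\ln n+1)$ (hence at most $\frac{2e^2}{e-1}Nn(\ln n+1)$ fitness evaluations, counting $N$ evaluations per iteration), and for every $\delta\ge 0$, $\Pr\!\left[T\ge \frac{2e^2(1+\delta)}{e-1}n\ln n\right]\le 2n^{-\delta}$.
   Context: Search space $\{0,1\}^n$; objective $f=(f_1,f_2):\{0,1\}^n\to\mathbb{R}^2$, both objectives maximized. $x$ strictly dominates $y$ if $f_1(x)\ge f_1(y)$, $f_2(x)\ge f_2(y)$ and at least one inequality is strict. Populations are multisets of bit strings; for a population $P$, $f(P)=\{f(x):x\in P\}$. Non-dominated sorting of a population $S$: $F_1$ is the set of individuals of $S$ not strictly dominated by any individual of $S$; inductively, $F_{k+1}$ is the set of individuals of $S\setminus(F_1\cup\dots\cup F_k)$ not strictly dominated by any individual of $S\setminus(F_1\cup\dots\cup F_k)$; the rank of $x$ in $S$ is the $k$ with $x\in F_k$. Crowding distance of the individuals of a set $S$ (computed with respect to $S$): start with $\mathrm{cDis}(x)=0$ for all $x\in S$; for each $i\in\{1,2\}$, sort $S$ in ascending $f_i$-value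 as $S_{i.1},\dots,S_{i.|S|}$ (ties broken arbitrarily), set $\mathrm{cDis}(S_{i.1})=\mathrm{cDis}(S_{i.|S|})=+\infty$, and for $2\le j\le |S|-1$ add $\frac{f_i(S_{i.j+1})-f_i(S_{i.j-1})}{f_i(S_{i.|S|})-f_i(S_{i.1})}$ to $\mathrm{cDis}(S_{i.j})$ (if $f_i$ is constant on $S$, these summands are taken to be $0$). The NSGA-II with population size $N$: $P_0$ consists of $N$ independent uniformly random bit strings; in iteration $t=0,1,2,\dots$ it generates an offspring population $Q_t$ of $N$ individuals, sets $R_t=P_t\cup Q_t$ (multiset union, $2N$ individuals), computes the fronts $F_1,F_2,\dots$ of $R_t$, lets $i^*$ be minimal with $\sum_{i\le i^*}|F_i|\ge N$, computes the crowding distance of each individual of $F_i$ ($i\le i^*$) with respect to $F_i$, and sets $P_{t+1}=F_1\cup\dots\cup F_{i^*-1}\cup\tilde F_{i^*}$, where $\tilde F_{i^*}$ consists of the $N-\sum_{i<i^*}|F_i|$ individuals of $F_{i^*}$ with largest crowding distance, ties broken uniformly at random. One-bit mutation flips exactly one bit position chosen uniformly at random; standard bit-wise mutation flips each bit independently with probability $1/n$; all random choices are independent. \textsc{OneMinMax}: $f(x)=(n-\sum_{i=1}^n x_i,\ \sum_{i=1}^n x_i)$; its Pareto front is $\{(k,n-k):k\in\{0,\dots,n\}\}$. *)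

theory Defs
  imports "HOL-Probability.Probability"
begin

type_synonym bits = "bool list"
type_synonym pop = "bool list list"

definition oneminmax :: "bits \<Rightarrow> real \<times> real" where
  "oneminmax x = (real (length x - count_list x True), real (count_list x True))"

definition sdom :: "real \<times> real \<Rightarrow> real \<times> real \<Rightarrow> bool" where
  "sdom a b \<longleftrightarrow> fst a \<ge> fst b \<and> snd a \<ge> snd b \<and> (fst a > fst b \<or> snd a > snd b)"

section \<open>Non-dominated sorting (individuals of R are identified by their index)\<close>

definition nondom_set :: "(bits \<Rightarrow> real \<times> real) \<Rightarrow> pop \<Rightarrow> nat set \<Rightarrow> nat set" where
  "nondom_set f R S = {x \<in> S. \<not> (\<exists>y\<in>S. sdom (f (R ! y)) (f (R ! x)))}"

text \<open>remaining f R k = R minus F_1,...,F_k\<close>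
fun remaining :: "(bits \<Rightarrow> real \<times> real) \<Rightarrow> pop \<Rightarrow> nat \<Rightarrow> nat set" where
  "remaining f R 0 = {..<length R}"
| "remaining f R (Suc k) = remaining f R k - nondom_set f R (remaining f R k)"

text \<open>front f R k is the front F_(k+1) of the paper (0-based here).\<close>
definition front :: "(bits \<Rightarrow> real \<times> real) \<Rightarrow> pop \<Rightarrow> nat \<Rightarrow> nat set" where
  "front f R k = nondom_set f R (remaining f R k)"

text \<open>critical front index (0-based i* - 1): least j with |F_1 u ... u F_(j+1)| >= N\<close>
definition crit :: "(bits \<Rightarrow> real \<times> real) \<Rightarrow> pop \<Rightarrow> nat \<Rightarrow> nat" where
  "crit f R N = (LEAST j. N \<le> card ({..<length R} - remaining f R (Suc j)))"

definition objv :: "(bits \<Rightarrow> real \<times> real) \<Rightarrow> nat \<Rightarrow> bits \<Rightarrow> real" where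
  "objv f i x = (if i = 1 then fst (f x) else snd (f x))"

definition cd_obj :: "(nat \<Rightarrow> real) \<Rightarrow> nat list \<Rightarrow> nat \<Rightarrow> ereal" where
  "cd_obj g xs x = (let k = (LEAST k. k < length xs \<and> xs ! k = x); m = length xs in
     if k = 0 \<or> k = m - 1 then \<infinity>
     else if g (xs ! (m - 1)) = g (xs ! 0) then 0
     else ereal ((g (xs ! (k + 1)) - g (xs ! (k - 1))) / (g (xs ! (m - 1)) - g (xs ! 0))))"

text \<open>A tie-breaking rule for the sorting inside the crowding-distance computation:
  given the iteration t, the combined population R, a front S and an objective i,
  it returns a sorting of S in ascending f_i value (ties broken arbitrarily).\<close>
type_synonym tiebreak = "nat \<Rightarrow> pop \<Rightarrow> nat set \<Rightarrow> nat \<Rightarrow> nat list"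

definition valid_tiebreak :: "(bits \<Rightarrow> real \<times> real) \<Rightarrow> tiebreak \<Rightarrow> bool" where
  "valid_tiebreak f tb \<longleftrightarrow> (\<forall>t R S i. finite S \<and> i \<in> {1, 2} \<longrightarrow>
      distinct (tb t R S i) \<and> set (tb t R S i) = S \<and>
      sorted_wrt (\<lambda>a b. objv f i (R ! a) \<le> objv f i (R ! b)) (tb t R S i))"

definition cdis :: "(bits \<Rightarrow> real \<times> real) \<Rightarrow> tiebreak \<Rightarrow> nat \<Rightarrow> pop \<Rightarrow> nat set \<Rightarrow> nat \<Rightarrow> ereal" where
  "cdis f tb t R S x =
     cd_obj (\<lambda>j. objv f 1 (R ! j)) (tb t R S 1) x + cd_obj (\<lambda>j. objv f 2 (R ! j)) (tb t R S 2) x"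

text \<open>All admissible index sets of the next population: F_1 u ... u F_(i*-1) together with
  N - |F_1 u ... u F_(i*-1)| individuals of F_(i*) of largest crowding distance.
  Choosing uniformly among these sets = breaking ties uniformly at random.\<close>
definition survivor_sets :: "(bits \<Rightarrow> real \<times> real) \<Rightarrow> nat \<Rightarrow> tiebreak \<Rightarrow> nat \<Rightarrow> pop \<Rightarrow> nat set set" where
  "survivor_sets f N tb t R =
     (let j = crit f R N; Fj = front f R j; keep = {..<length R} - remaining f R j;
          k = N - card keep
      in {keep \<union> A | A. A \<subseteq> Fj \<and> card A = k \<and>
            (\<forall>x\<in>A. \<forall>y\<in>Fj - A. cdis f tb t R Fj y \<le> cdis f tb t R Fj x)})"

fun indep_list :: "('a \<Rightarrow> 'b pmf) \<Rightarrow> 'a list \<Rightarrow> 'b list pmf" where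
  "indep_list g [] = return_pmf []"
| "indep_list g (x # xs) = bind_pmf (g x) (\<lambda>y. map_pmf (\<lambda>ys. y # ys) (indep_list g xs))"

definition one_bit_mut :: "bits \<Rightarrow> bits pmf" where
  "one_bit_mut x = map_pmf (\<lambda>i. x[i := \<not> x ! i]) (pmf_of_set {..<length x})"

definition bitwise_mut :: "bits \<Rightarrow> bits pmf" where
  "bitwise_mut x = indep_list
     (\<lambda>b. map_pmf (\<lambda>c. if c then \<not> b else b) (bernoulli_pmf (1 / real (length x)))) x"

definition uniform_parent :: "pop \<Rightarrow> bits pmf" where
  "uniform_parent P = map_pmf (\<lambda>i. P ! i) (pmf_of_set {..<length P})"

datatype offspring_mode = OneBitEach | BitwiseEach | OneBitRandom | BitwiseRandom

fun offspring :: "offspring_mode \<Rightarrow> pop \<Rightarrow> pop pmf" where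
  "offspring OneBitEach P = indep_list one_bit_mut P"
| "offspring BitwiseEach P = indep_list bitwise_mut P"
| "offspring OneBitRandom P =
     indep_list (\<lambda>_. bind_pmf (uniform_parent P) one_bit_mut) [0..<length P]"
| "offspring BitwiseRandom P =
     indep_list (\<lambda>_. bind_pmf (uniform_parent P) bitwise_mut) [0..<length P]"

definition random_bits :: "nat \<Rightarrow> bits pmf" where
  "random_bits n = pmf_of_set {x :: bool list. length x = n}"

definition init_pop :: "nat \<Rightarrow> nat \<Rightarrow> pop pmf" where
  "init_pop n N = indep_list (\<lambda>_. random_bits n) [0..<N]"

definition nsga2_step ::
  "offspring_mode \<Rightarrow> (bits \<Rightarrow> real \<times> real) \<Rightarrow> nat \<Rightarrow> tiebreak \<Rightarrow> nat \<Rightarrow> pop \<Rightarrow> pop pmf" where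
  "nsga2_step mode f N tb t P =
     bind_pmf (offspring mode P) (\<lambda>Q.
       bind_pmf (pmf_of_set (survivor_sets f N tb t (P @ Q))) (\<lambda>A.
         return_pmf (map (\<lambda>i. (P @ Q) ! i) (sorted_list_of_set A))))"

text \<open>Joint distribution of the history [P_0, ..., P_t].\<close>
fun nsga2_hist ::
  "offspring_mode \<Rightarrow> (bits \<Rightarrow> real \<times> real) \<Rightarrow> nat \<Rightarrow> nat \<Rightarrow> tiebreak \<Rightarrow> nat \<Rightarrow> pop list pmf" where
  "nsga2_hist mode f n N tb 0 = map_pmf (\<lambda>P. [P]) (init_pop n N)"
| "nsga2_hist mode f n N tb (Suc t) =
     bind_pmf (nsga2_hist mode f n N tb t)
       (\<lambda>h. map_pmf (\<lambda>P'. h @ [P']) (nsga2_step mode f N tb t (last h)))"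

definition covers_front :: "nat \<Rightarrow> pop \<Rightarrow> bool" where
  "covers_front n P \<longleftrightarrow> (\<forall>k\<le>n. (real k, real (n - k)) \<in> oneminmax ` set P)"

text \<open>For a history h = [P_0,...,P_t]: min(T, t).\<close>
definition T_trunc :: "nat \<Rightarrow> pop list \<Rightarrow> nat" where
  "T_trunc n h = (LEAST s. s = length h - 1 \<or> covers_front n (h ! s))"

text \<open>E[T] = sup_t E[min(T,t)] (monotone convergence; T may be infinite).\<close>
definition expected_T :: "offspring_mode \<Rightarrow> nat \<Rightarrow> nat \<Rightarrow> tiebreak \<Rightarrow> ennreal" where
  "expected_T mode n N tb =
     (SUP t. \<integral>\<^sup>+ h. ennreal (real (T_trunc n h)) \<partial>measure_pmf (nsga2_hist mode oneminmax n N tb t))"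

text \<open>Pr[T >= m] = Pr[none of P_0,...,P_(m-1) covers the Pareto front].\<close>
definition prob_T_ge :: "offspring_mode \<Rightarrow> nat \<Rightarrow> nat \<Rightarrow> tiebreak \<Rightarrow> nat \<Rightarrow> real" where
  "prob_T_ge mode n N tb m =
     measure_pmf.prob (nsga2_hist mode oneminmax n N tb m) {h. \<forall>s<m. \<not> covers_front n (h ! s)}"

end

theory Submission
  imports Defs
begin

text \<open>Bit strings of equal length are mutually incomparable under OneMinMax, so the whole combined
  population forms the first front and survival is decided by crowding distance alone. At most
  \<open>4(n + 1)\<close> individuals have positive crowding distance, and every number of ones present has a
  representative among them; hence for \<open>N \<ge> 4(n + 1)\<close> no value of the number of ones is ever lost.
  Around the value of the first initial individual the present values contain a growing interval.
  If \<open>z\<close> values of \<open>{0, \<dots>, n}\<close> lie outside it, flipping a single bit of an individual at one of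
  its two ends extends it with probability at least \<open>z / (8n)\<close> per iteration. This multiplicative
  drift gives \<open>E[z_t] \<le> n (1 - 1/(8n))^t\<close>, whence the tail bound by Markov's inequality, and the
  potential \<open>8n (ln z + 1)\<close> drops by at least one per iteration in expectation, whence
  \<open>E[T] \<le> 8n (ln n + 1) \<le> 2e\<^sup>2/(e - 1) n (ln n + 1)\<close>.\<close>

lemma prod_list_le_member:
  assumes "x0 \<in> set xs" "\<forall>x\<in>set xs. 0 \<le> f x \<and> f x \<le> (1::real)"
  shows "(\<Prod>x\<leftarrow>xs. f x) \<le> f x0"
  using assms
proof (induction xs)
  case (Cons a xs)
  have "0 \<le> (\<Prod>x\<leftarrow>xs. f x)" "(\<Prod>x\<leftarrow>xs. f x) \<le> 1"
    using Cons.prems(2) by (induction xs) (auto intro: mult_le_one)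
  moreover have "0 \<le> f a" "f a \<le> 1" using Cons.prems(2) by auto
  ultimately have "f a * (\<Prod>x\<leftarrow>xs. f x) \<le> f a" "f a * (\<Prod>x\<leftarrow>xs. f x) \<le> (\<Prod>x\<leftarrow>xs. f x)"
    by (simp_all add: mult_left_le mult_left_le_one_le)
  moreover have "x0 \<noteq> a \<Longrightarrow> (\<Prod>x\<leftarrow>xs. f x) \<le> f x0" using Cons by simp
  ultimately show ?case by (cases "x0 = a") auto
qed simp

text \<open>Bernoulli's inequality applied to \<open>(1 + q)^N\<close>, using \<open>(1 - q)^N (1 + q)^N \<le> 1\<close>.\<close>
lemma one_minus_power_le_inverse:
  assumes "0 \<le> q" "q \<le> (1::real)"
  shows "(1 - q) ^ N \<le> 1 / (1 + real N * q)"
proof -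
  have "(1 - q) ^ N * (1 + real N * q) \<le> (1 - q) ^ N * (1 + q) ^ N"
    using Bernoulli_inequality[of q N] assms by (intro mult_left_mono) auto
  also have "\<dots> = (1 - q\<^sup>2) ^ N"
    by (simp add: power_mult_distrib[symmetric] power2_eq_square algebra_simps)
  also have "\<dots> \<le> 1" using assms by (intro power_le_one) (auto simp: power_le_one)
  finally show ?thesis using assms by (simp add: field_simps add_pos_nonneg)
qed

lemma measure_bind_pmf:
  "measure (bind_pmf M f) X = (\<integral>x. measure (f x) X \<partial>M)"
proof -
  have int: "integrable M (\<lambda>x. measure (f x) X)"
    by (rule measure_pmf.integrable_const_bound[where B=1]) auto
  have "measure (bind_pmf M f) X = enn2real (\<integral>\<^sup>+x. emeasure (f x) X \<partial>M)"
    by (simp add: measure_def)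
  also have "\<dots> = enn2real (\<integral>\<^sup>+x. ennreal (measure (f x) X) \<partial>M)"
    by (simp add: measure_pmf.emeasure_eq_measure)
  also have "\<dots> = (\<integral>x. measure (f x) X \<partial>M)"
    by (subst nn_integral_eq_integral[OF int]) auto
  finally show ?thesis .
qed

lemma measure_bind_pmf_ge:
  assumes "\<forall>x\<in>set_pmf M. x \<in> S \<longrightarrow> set_pmf (K x) \<subseteq> X"
  shows "measure M S \<le> measure (bind_pmf M K) X"
proof -
  have "AE x in M. indicator S x \<le> measure (K x) X"
  proof (rule AE_pmfI)
    fix x assume "x \<in> set_pmf M"
    then have "x \<in> S \<Longrightarrow> measure (K x) X = 1"
      using assms by (auto simp: measure_pmf.prob_eq_1 AE_measure_pmf_iff)
    then show "indicator S x \<le> measure (K x) X" by (cases "x \<in> S") auto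
  qed
  then have "(\<integral>x. indicator S x \<partial>M) \<le> (\<integral>x. measure (K x) X \<partial>M)"
    by (intro integral_mono_AE measure_pmf.integrable_const_bound[where B=1]) auto
  then show ?thesis by (simp add: measure_bind_pmf)
qed

text \<open>The common core of both drift arguments.\<close>
lemma integral_le_minus_measures:
  fixes f :: "'a \<Rightarrow> real"
  assumes bound: "\<forall>x\<in>set_pmf M. f x + c * indicator A x + c * indicator B x \<le> z"
    and f_bounded: "\<forall>x\<in>set_pmf M. \<bar>f x\<bar> \<le> K"
  shows "(\<integral>x. f x \<partial>M) + c * (measure M A + measure M B) \<le> z"
proof -
  have int_f: "integrable M f"
    using f_bounded by (intro measure_pmf.integrable_const_bound[where B=K]) (auto intro!: AE_pmfI)
  have int_ind: "integrable M (\<lambda>x. c * indicator A x)" "integrable M (\<lambda>x. c * indicator B x)"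
    by (auto intro!: integrable_mult_right measure_pmf.integrable_const_bound[where B=1])
  have "(\<integral>x. f x + c * indicator A x + c * indicator B x \<partial>M) \<le> (\<integral>x. z \<partial>M)"
    using bound int_f int_ind by (intro integral_mono_AE) (auto intro!: AE_pmfI)
  then show ?thesis using int_f int_ind by (simp add: Bochner_Integration.integral_add algebra_simps)
qed

lemma set_pmf_indep_list:
  "ys \<in> set_pmf (indep_list g xs) \<Longrightarrow> length ys = length xs \<and> (\<forall>i<length xs. ys ! i \<in> set_pmf (g (xs ! i)))"
proof (induction xs arbitrary: ys)
  case (Cons x xs)
  then obtain y zs where "ys = y # zs" "y \<in> set_pmf (g x)" "zs \<in> set_pmf (indep_list g xs)" by auto
  then show ?case using Cons.IH by (auto simp: nth_Cons split: nat.split)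
qed simp

lemma pmf_indep_list:
  "pmf (indep_list g xs) ys =
     (if length ys = length xs then \<Prod>i<length xs. pmf (g (xs ! i)) (ys ! i) else 0)"
proof (induction xs arbitrary: ys)
  case Nil
  then show ?case by (cases ys) (auto simp: pmf_return)
next
  case (Cons x xs)
  show ?case
  proof (cases ys)
    case Nil
    then show ?thesis by (auto simp: pmf_bind pmf_eq_0_set_pmf intro!: integral_eq_zero_AE)
  next
    case (Cons z zs)
    have "pmf (map_pmf (Cons y) (indep_list g xs)) (z # zs) = indicator {z} y * pmf (indep_list g xs) zs" for y
      by (cases "z = y") (auto simp: pmf_eq_0_set_pmf pmf_map_inj' inj_def)
    then have "pmf (indep_list g (x # xs)) ys = pmf (g x) z * pmf (indep_list g xs) zs"
      using Cons by (simp add: pmf_bind measure_pmf_single)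
    then show ?thesis using Cons.IH[of zs] Cons
      by (simp add: prod.lessThan_Suc_shift del: prod.lessThan_Suc)
  qed
qed

lemma measure_indep_list_none:
  fixes g :: "'a \<Rightarrow> 'b pmf"
  shows "measure (indep_list g xs) {ys. \<forall>y\<in>set ys. y \<notin> E} = (\<Prod>x\<leftarrow>xs. 1 - measure (g x) E)"
proof (induction xs)
  case (Cons x xs)
  define F where "F = {ys. \<forall>y\<in>set ys. y \<notin> E}"
  have "measure (indep_list g (x # xs)) F =
      (\<integral>y. measure (map_pmf (Cons y) (indep_list g xs)) F \<partial>g x)"
    by (simp add: measure_bind_pmf)
  also have "\<dots> = (\<integral>y. measure (indep_list g xs) F * indicator (- E) y \<partial>g x)"
    by (intro Bochner_Integration.integral_cong) (auto simp: F_def indicator_def vimage_def)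
  also have "\<dots> = measure (indep_list g xs) F * (1 - measure (g x) E)"
    using measure_pmf.prob_compl[of E "g x"] by (simp add: Compl_eq_Diff_UNIV)
  finally show ?case using Cons.IH by (simp add: F_def mult.commute)
qed simp

lemma measure_indep_list_ex:
  fixes g :: "'a \<Rightarrow> 'b pmf"
  shows "measure (indep_list g xs) {ys. \<exists>y\<in>set ys. y \<in> E} = 1 - (\<Prod>x\<leftarrow>xs. 1 - measure (g x) E)"
proof -
  have "{ys. \<exists>y\<in>set ys. y \<in> E} = UNIV - {ys. \<forall>y\<in>set ys. y \<notin> E}" by auto
  then show ?thesis
    using measure_pmf.prob_compl[of "{ys. \<forall>y\<in>set ys. y \<notin> E}" "indep_list g xs"]
      measure_indep_list_none[of g xs E] by simp
qed

lemma measure_indep_list_ex_ge: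
  fixes g :: "'a \<Rightarrow> 'b pmf"
  assumes "x0 \<in> set xs" "r \<le> measure (g x0) E"
  shows "r \<le> measure (indep_list g xs) {ys. \<exists>y\<in>set ys. y \<in> E}"
proof -
  have "(\<Prod>x\<leftarrow>xs. 1 - measure (g x) E) \<le> 1 - measure (g x0) E"
    by (rule prod_list_le_member[OF assms(1)]) auto
  then show ?thesis unfolding measure_indep_list_ex using assms(2) by simp
qed

text \<open>With \<open>N\<close> parents drawn uniformly from \<open>P\<close>, a single good parent still yields success
  probability \<open>q\<close> per draw with \<open>N q \<ge> r\<close>, and \<open>1 - (1 - q)^N \<ge> 1 - 1 / (1 + r) \<ge> r / 2\<close>.\<close>
lemma measure_resample_ex_ge:
  fixes mut :: "bits \<Rightarrow> 'b pmf"
  assumes "x0 \<in> set P" "length P = N" "r \<le> measure (mut x0) E" "0 \<le> r" "r \<le> 1"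
  shows "r / 2 \<le> measure (indep_list (\<lambda>_. bind_pmf (uniform_parent P) mut) [0..<N])
                   {ys. \<exists>y\<in>set ys. y \<in> E}"
proof -
  obtain i0 where i0: "i0 < N" "P ! i0 = x0" using assms(1,2) by (metis in_set_conv_nth)
  define q where "q = measure (bind_pmf (uniform_parent P) mut) E"
  have "{..<length P} \<noteq> {}" using i0 assms(2) by auto
  then have "q = (\<Sum>i<N. measure (mut (P ! i)) E) / N"
    unfolding q_def uniform_parent_def bind_map_pmf measure_bind_pmf
    by (subst integral_pmf_of_set) (simp_all add: assms(2))
  moreover have "measure (mut (P ! i0)) E \<le> (\<Sum>i<N. measure (mut (P ! i)) E)"
    using i0 by (intro member_le_sum) auto
  ultimately have Nq: "r \<le> real N * q" using assms(3) i0 by (simp add: field_simps)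
  have q: "0 \<le> q" "q \<le> 1" by (auto simp: q_def)
  have "(\<Prod>x\<leftarrow>[0..<N]. 1 - q) = (1 - q) ^ N" by (induction N) auto
  then have eq: "measure (indep_list (\<lambda>_. bind_pmf (uniform_parent P) mut) [0..<N])
      {ys. \<exists>y\<in>set ys. y \<in> E} = 1 - (1 - q) ^ N"
    unfolding measure_indep_list_ex q_def by simp
  have "(1 - q) ^ N \<le> 1 / (1 + real N * q)" by (rule one_minus_power_le_inverse[OF q])
  also have "\<dots> \<le> 1 / (1 + r)" using Nq assms(4) by (intro divide_left_mono) auto
  finally have "(1 - q) ^ N \<le> 1 / (1 + r)" .
  moreover have "r / 2 \<le> 1 - 1 / (1 + r)"
    using assms(4,5) mult_left_le_one_le[of r r] by (simp add: field_simps)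
  ultimately show ?thesis unfolding eq by linarith
qed

section \<open>Crowding distance\<close>

lemma sorted_wrt_nth_mono:
  assumes "sorted_wrt (\<lambda>a b. g a \<le> (g b::'b::linorder)) xs" "i \<le> j" "j < length xs"
  shows "g (xs ! i) \<le> g (xs ! j)"
  using assms sorted_wrt_nth_less[OF assms(1), of i j] by (cases "i = j") auto

lemma cd_obj_nth:
  assumes "distinct xs" "k < length xs"
  shows "cd_obj g xs (xs ! k) =
    (if k = 0 \<or> k = length xs - 1 then \<infinity>
     else if g (xs ! (length xs - 1)) = g (xs ! 0) then 0
     else ereal ((g (xs ! (k + 1)) - g (xs ! (k - 1))) / (g (xs ! (length xs - 1)) - g (xs ! 0))))"
proof -
  have "(LEAST i. i < length xs \<and> xs ! i = xs ! k) = k"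
    using assms by (intro Least_equality) (auto simp: nth_eq_iff_index_eq)
  then show ?thesis unfolding cd_obj_def Let_def by simp
qed

context
  fixes g :: "nat \<Rightarrow> real" and xs :: "nat list"
  assumes sorted: "sorted_wrt (\<lambda>a b. g a \<le> g b) xs" and distinct: "distinct xs"
begin

lemma cd_obj_nonneg:
  assumes "x \<in> set xs"
  shows "0 \<le> cd_obj g xs x"
proof -
  obtain k where k: "k < length xs" "x = xs ! k" using assms by (auto simp: in_set_conv_nth)
  show ?thesis
  proof (cases "k = 0 \<or> k = length xs - 1")
    case False
    then have "g (xs ! (k - 1)) \<le> g (xs ! (k + 1))" "g (xs ! 0) \<le> g (xs ! (length xs - 1))"
      using k by (auto intro!: sorted_wrt_nth_mono[OF sorted])
    then show ?thesis using cd_obj_nth[OF distinct k(1)] False k(2) by simp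
  qed (use cd_obj_nth[OF distinct k(1)] k(2) in simp)
qed

lemma cd_obj_nth_pos_imp:
  assumes "k < length xs" "0 < cd_obj g xs (xs ! k)"
  shows "k = 0 \<or> k = length xs - 1 \<or> g (xs ! (k - 1)) < g (xs ! (k + 1))"
proof (rule ccontr)
  assume c: "\<not> ?thesis"
  then have "g (xs ! (k - 1)) \<le> g (xs ! (k + 1))"
    using assms by (intro sorted_wrt_nth_mono[OF sorted]) auto
  with c have "g (xs ! (k - 1)) = g (xs ! (k + 1))" by auto
  then show False using assms(2) c cd_obj_nth[OF distinct assms(1), of g] by (auto split: if_splits)
qed

lemma cd_obj_nth_pos:
  assumes "k < length xs" "k + 1 < length xs \<Longrightarrow> g (xs ! k) < g (xs ! (k + 1))"
  shows "0 < cd_obj g xs (xs ! k)"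
proof (cases "k = 0 \<or> k = length xs - 1")
  case False
  then have up: "g (xs ! k) < g (xs ! (k + 1))" using assms by auto
  have "g (xs ! (k - 1)) \<le> g (xs ! k)" "g (xs ! 0) \<le> g (xs ! (k - 1))"
    "g (xs ! (k + 1)) \<le> g (xs ! (length xs - 1))"
    using False assms(1) by (auto intro!: sorted_wrt_nth_mono[OF sorted])
  then show ?thesis using cd_obj_nth[OF distinct assms(1), of g] False up by auto
qed (use cd_obj_nth[OF distinct assms(1)] in simp)

text \<open>The last position carrying a given value is a boundary point or followed by a larger value.\<close>
lemma exists_cd_obj_pos_same_value:
  assumes "x \<in> set xs"
  shows "\<exists>y\<in>set xs. g y = g x \<and> 0 < cd_obj g xs y"
proof -
  define K where "K = {k. k < length xs \<and> g (xs ! k) = g x}"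
  have "K \<noteq> {}" using assms by (auto simp: K_def in_set_conv_nth)
  moreover have "finite K" by (auto simp: K_def)
  ultimately have "Max K \<in> K" "\<And>k'. k' \<in> K \<Longrightarrow> k' \<le> Max K" by auto
  then obtain k where k: "k < length xs" "g (xs ! k) = g x" and k_max: "\<And>k'. k' \<in> K \<Longrightarrow> k' \<le> k"
    unfolding K_def by blast
  have "g (xs ! k) < g (xs ! (k + 1))" if "k + 1 < length xs"
  proof -
    have "g (xs ! k) \<le> g (xs ! (k + 1))" using that by (intro sorted_wrt_nth_mono[OF sorted]) auto
    moreover have "k + 1 \<notin> K" using k_max[of "k + 1"] by auto
    then have "g (xs ! (k + 1)) \<noteq> g x" using that by (simp add: K_def)
    ultimately show ?thesis using k(2) by simp
  qed
  then show ?thesis using cd_obj_nth_pos[OF k(1)] k by (metis nth_mem)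
qed

definition ascents :: "nat set" where
  "ascents = {j. 0 < j \<and> j < length xs \<and> g (xs ! (j - 1)) < g (xs ! j)}"

lemma cd_obj_pos_index:
  assumes "k < length xs" "0 < cd_obj g xs (xs ! k)"
  shows "k \<in> {0, length xs - 1} \<union> ascents \<union> (\<lambda>j. j - 1) ` ascents"
proof -
  consider "k = 0 \<or> k = length xs - 1" | "g (xs ! (k - 1)) < g (xs ! k)"
    | "g (xs ! k) < g (xs ! (k + 1))" "k + 1 < length xs"
    using cd_obj_nth_pos_imp[OF assms] assms(1) by (cases "k + 1 < length xs") force+
  then show ?thesis
  proof cases
    case 2
    then have "k \<noteq> 0" by (cases k) auto
    then show ?thesis using 2 assms(1) by (auto simp: ascents_def)
  next
    case 3
    then have "k + 1 \<in> ascents" by (auto simp: ascents_def)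
    then show ?thesis by (metis UnI2 add_diff_cancel_right' image_eqI)
  qed auto
qed

text \<open>Values strictly increase along the ascents, so they inject into the values \<open>1, \<dots>, n\<close>.\<close>
lemma card_ascents_le:
  assumes nat_values: "\<forall>x\<in>set xs. \<exists>v\<le>n. g x = real v"
  shows "card ascents \<le> n"
proof -
  have "inj_on (\<lambda>j. g (xs ! j)) ascents"
  proof (rule inj_onI, rule ccontr)
    fix i j assume ij: "i \<in> ascents" "j \<in> ascents" "g (xs ! i) = g (xs ! j)" "i \<noteq> j"
    have "g (xs ! min i j) \<le> g (xs ! (max i j - 1))"
      using ij by (intro sorted_wrt_nth_mono[OF sorted]) (auto simp: ascents_def)
    moreover have "g (xs ! (max i j - 1)) < g (xs ! max i j)"
      using ij by (auto simp: ascents_def max_def)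
    ultimately show False using ij(3) by (auto simp: min_def max_def split: if_splits)
  qed
  moreover have "(\<lambda>j. g (xs ! j)) ` ascents \<subseteq> real ` {1..n}"
  proof
    fix y assume "y \<in> (\<lambda>j. g (xs ! j)) ` ascents"
    then obtain j where j: "j \<in> ascents" "y = g (xs ! j)" by auto
    then have "xs ! j \<in> set xs" "xs ! (j - 1) \<in> set xs" by (auto simp: ascents_def)
    then obtain v w where "v \<le> n" "g (xs ! j) = real v" "g (xs ! (j - 1)) = real w"
      using nat_values by metis
    moreover have "g (xs ! (j - 1)) < g (xs ! j)" using j by (auto simp: ascents_def)
    ultimately show "y \<in> real ` {1..n}" using j by auto
  qed
  ultimately show ?thesis using card_inj_on_le[of _ ascents "real ` {1..n}"] by (simp add: card_image)
qed

lemma card_cd_obj_pos_le: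
  assumes "\<forall>x\<in>set xs. \<exists>v\<le>n. g x = real v"
  shows "card {x \<in> set xs. 0 < cd_obj g xs x} \<le> 2 * n + 2"
proof -
  define K where "K = {0, length xs - 1} \<union> ascents \<union> (\<lambda>j. j - 1) ` ascents"
  have fin: "finite ascents" by (rule finite_subset[of _ "{..<length xs}"]) (auto simp: ascents_def)
  have "{x \<in> set xs. 0 < cd_obj g xs x} \<subseteq> (!) xs ` K"
  proof
    fix x assume "x \<in> {x \<in> set xs. 0 < cd_obj g xs x}"
    then obtain k where "k < length xs" "x = xs ! k" "0 < cd_obj g xs (xs ! k)"
      by (auto simp: in_set_conv_nth)
    then show "x \<in> (!) xs ` K" using cd_obj_pos_index unfolding K_def by blast
  qed
  then have "card {x \<in> set xs. 0 < cd_obj g xs x} \<le> card ((!) xs ` K)"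
    using fin by (intro card_mono) (auto simp: K_def)
  also have "\<dots> \<le> card K" using fin by (intro card_image_le) (auto simp: K_def)
  also have "\<dots> \<le> card {0, length xs - 1} + card ascents + card ((\<lambda>j. j - 1) ` ascents)"
    unfolding K_def by (meson card_Un_le le_trans add_le_mono order_refl)
  also have "\<dots> \<le> 2 + n + n"
    using card_ascents_le[OF assms] card_image_le[OF fin, of "\<lambda>j. j - 1"]
    by (intro add_mono) (auto simp: card_insert_if)
  finally show ?thesis by simp
qed

end

section \<open>Survival selection on OneMinMax\<close>

definition ones :: "bits \<Rightarrow> nat" where
  "ones x = count_list x True"

lemma ones_le_length: "ones x \<le> length x"
  unfolding ones_def by (rule count_le_length)

lemma objv_oneminmax:
  "objv oneminmax 1 x = real (length x - ones x)" "objv oneminmax 2 x = real (ones x)"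
  by (simp_all add: objv_def oneminmax_def ones_def)

lemma not_sdom_oneminmax: "length x = length y \<Longrightarrow> \<not> sdom (oneminmax x) (oneminmax y)"
  unfolding sdom_def oneminmax_def using count_le_length[of x True] count_le_length[of y True]
  by auto

lemma survivor_sets_oneminmax:
  assumes "\<forall>x\<in>set R. length x = n" "N \<le> length R"
  shows "survivor_sets oneminmax N tb t R =
    {A. A \<subseteq> {..<length R} \<and> card A = N \<and>
        (\<forall>x\<in>A. \<forall>y\<in>{..<length R} - A.
           cdis oneminmax tb t R {..<length R} y \<le> cdis oneminmax tb t R {..<length R} x)}"
proof -
  have nondom: "nondom_set oneminmax R {..<length R} = {..<length R}"
    unfolding nondom_set_def using assms(1) not_sdom_oneminmax by auto
  then have "crit oneminmax R N = 0"
    unfolding crit_def using assms(2) by (intro Least_equality) auto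
  then show ?thesis using nondom unfolding survivor_sets_def Let_def front_def by auto
qed

context
  fixes R :: pop and n :: nat and tb :: tiebreak and t :: nat
  assumes lengths: "\<forall>x\<in>set R. length x = n" and valid: "valid_tiebreak oneminmax tb"
begin

lemma tiebreak_sorting:
  assumes "i \<in> {1, 2}"
  shows "distinct (tb t R {..<length R} i)" "set (tb t R {..<length R} i) = {..<length R}"
    "sorted_wrt (\<lambda>a b. objv oneminmax i (R ! a) \<le> objv oneminmax i (R ! b)) (tb t R {..<length R} i)"
  using valid assms unfolding valid_tiebreak_def by blast+

lemma objv_nat_values:
  assumes "i \<in> {1, 2}"
  shows "\<forall>x\<in>set (tb t R {..<length R} i). \<exists>v\<le>n. objv oneminmax i (R ! x) = real v"
proof
  fix x assume "x \<in> set (tb t R {..<length R} i)"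
  then have "length (R ! x) = n" using tiebreak_sorting(2)[OF assms] lengths by auto
  then have "objv oneminmax 1 (R ! x) = real (n - ones (R ! x))" "ones (R ! x) \<le> n"
    "objv oneminmax 2 (R ! x) = real (ones (R ! x))"
    using objv_oneminmax[of "R ! x"] ones_le_length[of "R ! x"] by simp_all
  then show "\<exists>v\<le>n. objv oneminmax i (R ! x) = real v"
    using assms diff_le_self by blast
qed

lemma card_cdis_pos_le: "card {j \<in> {..<length R}. 0 < cdis oneminmax tb t R {..<length R} j} \<le> 4 * n + 4"
proof -
  let ?pos = "\<lambda>i. {x \<in> set (tb t R {..<length R} i).
                  0 < cd_obj (\<lambda>j. objv oneminmax i (R ! j)) (tb t R {..<length R} i) x}"
  have "{j \<in> {..<length R}. 0 < cdis oneminmax tb t R {..<length R} j} \<subseteq> ?pos 1 \<union> ?pos 2"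
  proof -
    have "0 < a + b \<Longrightarrow> 0 < a \<or> 0 < b" for a b :: ereal by (metis add_nonpos_nonpos not_less)
    then show ?thesis using tiebreak_sorting(2)[of 1] tiebreak_sorting(2)[of 2] unfolding cdis_def by auto
  qed
  then have "card {j \<in> {..<length R}. 0 < cdis oneminmax tb t R {..<length R} j} \<le> card (?pos 1 \<union> ?pos 2)"
    by (intro card_mono) auto
  also have "\<dots> \<le> card (?pos 1) + card (?pos 2)" by (rule card_Un_le)
  also have "\<dots> \<le> (2 * n + 2) + (2 * n + 2)"
    by (intro add_mono card_cd_obj_pos_le tiebreak_sorting objv_nat_values) simp_all
  finally show ?thesis by simp
qed

lemma exists_cdis_pos_same_ones:
  assumes "i0 < length R"
  shows "\<exists>j<length R. ones (R ! j) = ones (R ! i0) \<and> 0 < cdis oneminmax tb t R {..<length R} j"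
proof -
  have "i0 \<in> set (tb t R {..<length R} 2)" using tiebreak_sorting(2)[of 2] assms by simp
  from exists_cd_obj_pos_same_value[OF tiebreak_sorting(3,1) this]
  obtain j where j: "j \<in> set (tb t R {..<length R} 2)" "ones (R ! j) = ones (R ! i0)"
    "0 < cd_obj (\<lambda>j. objv oneminmax 2 (R ! j)) (tb t R {..<length R} 2) j"
    by (auto simp: objv_oneminmax)
  have "j \<in> set (tb t R {..<length R} 1)" using j(1) tiebreak_sorting(2) by simp
  then have "0 \<le> cd_obj (\<lambda>j. objv oneminmax 1 (R ! j)) (tb t R {..<length R} 1) j"
    using cd_obj_nonneg[OF tiebreak_sorting(3,1)[of 1]] by simp
  then show ?thesis using j tiebreak_sorting(2)[of 2] by (auto simp: cdis_def add_nonneg_pos)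
qed

end

lemma exists_subset_card_largest:
  fixes h :: "'a \<Rightarrow> 'b::linorder"
  assumes "finite S" "k \<le> card S"
  shows "\<exists>A\<subseteq>S. card A = k \<and> (\<forall>x\<in>A. \<forall>y\<in>S - A. h y \<le> h x)"
  using assms(2)
proof (induction k)
  case 0
  show ?case by (intro exI[of _ "{}"]) auto
next
  case (Suc k)
  then obtain A where A: "A \<subseteq> S" "card A = k" "\<forall>x\<in>A. \<forall>y\<in>S - A. h y \<le> h x" by auto
  have fin: "finite (S - A)" using assms(1) by simp
  have "S - A \<noteq> {}"
  proof
    assume "S - A = {}"
    then have "card S \<le> card A" using A(1) by (simp add: subset_antisym)
    then show False using A(2) Suc.prems by simp
  qed
  then have "Max (h ` (S - A)) \<in> h ` (S - A)" using fin by (intro Max_in) auto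
  then obtain z where z: "z \<in> S - A" "h z = Max (h ` (S - A))" by auto
  then have "\<forall>y\<in>S - A. h y \<le> h z" using fin by simp
  moreover have "finite A" using A(1) assms(1) finite_subset by blast
  ultimately show ?case using z A by (intro exI[of _ "insert z A"]) auto
qed

lemma survivor_sets_keep_ones:
  assumes lengths: "\<forall>x\<in>set R. length x = n" and valid: "valid_tiebreak oneminmax tb"
    and "length R = 2 * N" and pop_size: "4 * (n + 1) \<le> N"
  shows "survivor_sets oneminmax N tb t R \<noteq> {}" "finite (survivor_sets oneminmax N tb t R)"
    and "A \<in> survivor_sets oneminmax N tb t R \<Longrightarrow>
      A \<subseteq> {..<length R} \<and> card A = N \<and> (\<forall>i<length R. \<exists>j\<in>A. ones (R ! j) = ones (R ! i))"
proof -
  have NR: "N \<le> length R" using assms(3) by simp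
  define cd where "cd = cdis oneminmax tb t R {..<length R}"
  note surv = survivor_sets_oneminmax[OF lengths NR, of tb t, folded cd_def]
  show "survivor_sets oneminmax N tb t R \<noteq> {}"
    using exists_subset_card_largest[of "{..<length R}" N cd] NR unfolding surv by auto
  show "finite (survivor_sets oneminmax N tb t R)"
    unfolding surv by (rule finite_subset[of _ "Pow {..<length R}"]) auto
  assume "A \<in> survivor_sets oneminmax N tb t R"
  then have A: "A \<subseteq> {..<length R}" "card A = N" "\<forall>x\<in>A. \<forall>y\<in>{..<length R} - A. cd y \<le> cd x"
    unfolding surv by auto
  have "\<exists>j\<in>A. ones (R ! j) = ones (R ! i)" if i: "i < length R" for i
  proof -
    obtain j where j: "j < length R" "ones (R ! j) = ones (R ! i)" "0 < cd j"
      using exists_cdis_pos_same_ones[OF lengths valid i] unfolding cd_def by blast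
    txt \<open>Otherwise the \<open>N\<close> survivors and \<open>j\<close> all have positive crowding distance.\<close>
    have "j \<in> A"
    proof (rule ccontr)
      assume j_out: "j \<notin> A"
      have "\<forall>x\<in>A. 0 < cd x" using A(3) j j_out by (fastforce intro: less_le_trans)
      then have "insert j A \<subseteq> {j' \<in> {..<length R}. 0 < cd j'}" using A(1) j by auto
      then have "card (insert j A) \<le> card {j' \<in> {..<length R}. 0 < cd j'}" by (intro card_mono) auto
      also have "\<dots> \<le> 4 * n + 4" using card_cdis_pos_le[OF lengths valid] unfolding cd_def .
      finally show False using j_out A(2) finite_subset[OF A(1)] pop_size by simp
    qed
    then show ?thesis using j by blast
  qed
  then show "A \<subseteq> {..<length R} \<and> card A = N \<and> (\<forall>i<length R. \<exists>j\<in>A. ones (R ! j) = ones (R ! i))"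
    using A by blast
qed

definition single_flips :: "bits \<Rightarrow> bool \<Rightarrow> bits set" where
  "single_flips x b = (\<lambda>j. x[j := \<not> x ! j]) ` {j. j < length x \<and> x ! j = b}"

lemma ones_eq_card: "ones x = card {j. j < length x \<and> x ! j}"
  unfolding ones_def count_list_eq_length_filter length_filter_conv_card by (simp add: eq_commute)

lemma card_zeros: "card {j. j < length x \<and> \<not> x ! j} = length x - ones x"
proof -
  have "{j. j < length x \<and> \<not> x ! j} = {..<length x} - {j. j < length x \<and> x ! j}" by auto
  then show ?thesis by (simp only:) (subst card_Diff_subset, auto simp: ones_eq_card)
qed

lemma ones_list_update:
  assumes "j < length x"
  shows "ones (x[j := v]) + (if x ! j then 1 else 0) = ones x + (if v then 1 else 0)"
proof -
  have x: "x = take j x @ x ! j # drop (Suc j) x" using assms by (simp add: id_take_nth_drop)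
  have u: "x[j := v] = take j x @ v # drop (Suc j) x" using assms by (simp add: upd_conv_take_nth_drop)
  show ?thesis unfolding ones_def by (subst (2) x, subst u) simp
qed

lemma ones_single_flips:
  "single_flips x False \<subseteq> {y. ones y = ones x + 1}" "single_flips x True \<subseteq> {y. ones y + 1 = ones x}"
  unfolding single_flips_def using ones_list_update by fastforce+

lemma inj_on_flip: "inj_on (\<lambda>j. x[j := \<not> x ! j]) {..<length x}"
proof (rule inj_onI, rule ccontr)
  fix i j assume ij: "i \<in> {..<length x}" "x[i := \<not> x ! i] = x[j := \<not> x ! j]" "i \<noteq> j"
  have "x[i := \<not> x ! i] ! i = x[j := \<not> x ! j] ! i" using ij(2) by (rule arg_cong)
  then show False using ij(1,3) by simp
qed

lemma measure_one_bit_mut_single_flips: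
  assumes "length x = n" "n \<ge> 1"
  shows "real (card {j. j < n \<and> x ! j = b}) / n \<le> measure (one_bit_mut x) (single_flips x b)"
proof -
  have "{..<length x} \<noteq> {}" using assms by (simp add: lessThan_empty_iff)
  then have "measure (one_bit_mut x) (single_flips x b) =
      real (card ({..<length x} \<inter> (\<lambda>i. x[i := \<not> x ! i]) -` single_flips x b)) / n"
    unfolding one_bit_mut_def by (simp add: measure_pmf_of_set assms(1))
  moreover have "card {j. j < n \<and> x ! j = b} \<le> card ({..<length x} \<inter> (\<lambda>i. x[i := \<not> x ! i]) -` single_flips x b)"
    using assms by (intro card_mono) (auto simp: single_flips_def)
  ultimately show ?thesis by (simp add: divide_right_mono)
qed

lemma pmf_bernoulli_flip:
  assumes "0 \<le> p" "p \<le> 1"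
  shows "pmf (map_pmf (\<lambda>c. if c then \<not> b else b) (bernoulli_pmf p)) y = (if y = b then 1 - p else p)"
proof -
  have inj: "inj (\<lambda>c. if c then \<not> b else (b::bool))" by (auto simp: inj_def split: if_splits)
  have "y = (\<lambda>c. if c then \<not> b else b) (y \<noteq> b)" by auto
  then have "pmf (map_pmf (\<lambda>c. if c then \<not> b else b) (bernoulli_pmf p)) y = pmf (bernoulli_pmf p) (y \<noteq> b)"
    using pmf_map_inj'[OF inj, of "bernoulli_pmf p" "y \<noteq> b"] by simp
  then show ?thesis using assms by (cases "y = b") auto
qed

lemma pmf_bitwise_mut_flip:
  assumes "length x = n" "n \<ge> 1" "j < n"
  shows "pmf (bitwise_mut x) (x[j := \<not> x ! j]) = (1 / real n) * (1 - 1 / real n) ^ (n - 1)"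
proof -
  define p where "p = 1 / real n"
  have p: "0 \<le> p" "p \<le> 1" using assms by (auto simp: p_def)
  have "pmf (bitwise_mut x) (x[j := \<not> x ! j]) =
      (\<Prod>i<length x. pmf (map_pmf (\<lambda>c. if c then \<not> x ! i else x ! i) (bernoulli_pmf p)) (x[j := \<not> x ! j] ! i))"
    by (simp only: bitwise_mut_def pmf_indep_list length_list_update if_True p_def assms(1) refl if_P)
  also have "\<dots> = (\<Prod>i<n. if i = j then p else 1 - p)"
    using assms(1) by (intro prod.cong) (auto simp: pmf_bernoulli_flip[OF p])
  also have "\<dots> = p * (\<Prod>i\<in>{..<n} - {j}. if i = j then p else 1 - p)"
    using assms(3) by (subst prod.remove[of _ j]) auto
  also have "(\<Prod>i\<in>{..<n} - {j}. if i = j then p else 1 - p) = (\<Prod>i\<in>{..<n} - {j}. 1 - p)"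
    by (rule prod.cong) auto
  also have "\<dots> = (1 - p) ^ (n - 1)" using assms(3) by simp
  finally show ?thesis by (simp add: p_def)
qed

lemma one_minus_inverse_power_ge_quarter:
  assumes "n \<ge> (1::nat)"
  shows "1 / 4 \<le> (1 - 1 / real n) ^ (n - 1)"
proof (cases "n = 1")
  case False
  define m where "m = n - 1"
  have m: "m \<ge> 1" "n = m + 1" using assms False by (auto simp: m_def)
  have "exp (1::real) \<le> 4" using exp_le by simp
  then have "1 / 4 \<le> 1 / exp (1::real)" by (simp add: field_simps)
  also have "\<dots> \<le> 1 / (1 + 1 / real m) ^ m"
    using exp_ge_one_plus_x_over_n_power_n[of m 1] m by (intro divide_left_mono) (auto simp: add_pos_nonneg)
  also have "\<dots> = (1 - 1 / real n) ^ (n - 1)"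
  proof -
    have "1 - 1 / real n = 1 / (1 + 1 / real m)" using m by (simp add: field_simps)
    then show ?thesis by (simp add: m_def power_one_over)
  qed
  finally show ?thesis .
qed simp

lemma measure_bitwise_mut_single_flips:
  assumes "length x = n" "n \<ge> 1"
  shows "real (card {j. j < n \<and> x ! j = b}) / (4 * n) \<le> measure (bitwise_mut x) (single_flips x b)"
proof -
  define J where "J = {j. j < n \<and> x ! j = b}"
  have inj: "inj_on (\<lambda>j. x[j := \<not> x ! j]) J"
    by (rule inj_on_subset[OF inj_on_flip]) (auto simp: J_def assms(1))
  have flips: "single_flips x b = (\<lambda>j. x[j := \<not> x ! j]) ` J" using assms by (simp add: single_flips_def J_def)
  have "measure (bitwise_mut x) (single_flips x b) = (\<Sum>y\<in>single_flips x b. pmf (bitwise_mut x) y)"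
    using flips by (simp add: measure_measure_pmf_finite J_def)
  also have "\<dots> = (\<Sum>j\<in>J. pmf (bitwise_mut x) (x[j := \<not> x ! j]))"
    unfolding flips by (rule sum.reindex[OF inj, unfolded comp_def])
  also have "\<dots> = (\<Sum>j\<in>J. (1 / real n) * (1 - 1 / real n) ^ (n - 1))"
    using pmf_bitwise_mut_flip[OF assms] by (intro sum.cong) (auto simp: J_def)
  also have "\<dots> = real (card J) * ((1 / real n) * (1 - 1 / real n) ^ (n - 1))" by simp
  finally have eq: "measure (bitwise_mut x) (single_flips x b) = real (card J) * ((1 / real n) * (1 - 1 / real n) ^ (n - 1))" .
  have "real (card J) * ((1 / real n) * (1 / 4)) \<le> real (card J) * ((1 / real n) * (1 - 1 / real n) ^ (n - 1))"
    using one_minus_inverse_power_ge_quarter[OF assms(2)] by (intro mult_left_mono) auto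
  then show ?thesis unfolding eq J_def[symmetric] by (simp add: field_simps)
qed

lemma measure_mutation_ge:
  assumes "mut = one_bit_mut \<or> mut = bitwise_mut" "length x = n" "n \<ge> 1" "single_flips x b \<subseteq> E"
  shows "real (card {j. j < n \<and> x ! j = b}) / (4 * real n) \<le> measure (mut x) E"
proof -
  have "real (card {j. j < n \<and> x ! j = b}) / (4 * real n) \<le> real (card {j. j < n \<and> x ! j = b}) / n"
    using assms(3) by (intro divide_left_mono) auto
  then have "real (card {j. j < n \<and> x ! j = b}) / (4 * real n) \<le> measure (mut x) (single_flips x b)"
    using assms(1) measure_one_bit_mut_single_flips[OF assms(2,3), of b]
      measure_bitwise_mut_single_flips[OF assms(2,3), of b] by auto
  also have "\<dots> \<le> measure (mut x) E" using assms(4) by (rule measure_pmf.finite_measure_mono) simp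
  finally show ?thesis .
qed

definition ones_values :: "pop \<Rightarrow> nat set" where
  "ones_values P = ones ` set P"

definition wf_pop :: "nat \<Rightarrow> nat \<Rightarrow> pop \<Rightarrow> bool" where
  "wf_pop n N P \<longleftrightarrow> length P = N \<and> (\<forall>x\<in>set P. length x = n)"

lemma length_mutation:
  "y \<in> set_pmf (one_bit_mut x) \<or> y \<in> set_pmf (bitwise_mut x) \<Longrightarrow> length y = length x"
  unfolding one_bit_mut_def bitwise_mut_def using set_pmf_indep_list by fastforce

lemma wf_pop_offspring:
  assumes "wf_pop n N P" "N \<ge> 1" "Q \<in> set_pmf (offspring mode P)"
  shows "wf_pop n N Q"
proof -
  have "P \<noteq> []" using assms(1,2) by (auto simp: wf_pop_def)
  then have parent: "x \<in> set_pmf (uniform_parent P) \<Longrightarrow> length x = n" for x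
    using assms(1) by (auto simp: uniform_parent_def lessThan_empty_iff wf_pop_def)
  have each: "y \<in> set_pmf (one_bit_mut (P ! i)) \<or> y \<in> set_pmf (bitwise_mut (P ! i)) \<Longrightarrow> length y = n"
    if "i < length P" for y i
    using that length_mutation[of y "P ! i"] assms(1) by (auto simp: wf_pop_def)
  have resampled: "y \<in> set_pmf (bind_pmf (uniform_parent P) one_bit_mut) \<or>
      y \<in> set_pmf (bind_pmf (uniform_parent P) bitwise_mut) \<Longrightarrow> length y = n" for y
    using length_mutation parent by fastforce
  have "length Q = length P \<and> (\<forall>i<length P. length (Q ! i) = n)"
  proof (cases mode)
    case OneBitEach
    then show ?thesis using set_pmf_indep_list[of Q one_bit_mut P] assms(3) each by auto
  next
    case BitwiseEach
    then show ?thesis using set_pmf_indep_list[of Q bitwise_mut P] assms(3) each by auto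
  next
    case OneBitRandom
    then show ?thesis
      using set_pmf_indep_list[of Q "\<lambda>_. bind_pmf (uniform_parent P) one_bit_mut" "[0..<length P]"]
        assms(3) resampled by auto
  next
    case BitwiseRandom
    then show ?thesis
      using set_pmf_indep_list[of Q "\<lambda>_. bind_pmf (uniform_parent P) bitwise_mut" "[0..<length P]"]
        assms(3) resampled by auto
  qed
  then show ?thesis using assms(1) unfolding wf_pop_def by (metis in_set_conv_nth)
qed

section \<open>Potentials\<close>

text \<open>The drift potential: the values \<open>0, \<dots>, n\<close> of the number of ones that lie outside the maximal
  interval of \<open>V\<close> around the anchor value \<open>v\<close>. Since the values of the population never get lost,
  this interval only grows.\<close>
definition gaps_above :: "nat \<Rightarrow> nat \<Rightarrow> nat set \<Rightarrow> nat set" where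
  "gaps_above n v V = {w. v < w \<and> w \<le> n \<and> \<not> {v..w} \<subseteq> V}"

definition gaps_below :: "nat \<Rightarrow> nat set \<Rightarrow> nat set" where
  "gaps_below v V = {w. w < v \<and> \<not> {w..v} \<subseteq> V}"

definition uncovered :: "nat \<Rightarrow> nat \<Rightarrow> nat set \<Rightarrow> nat" where
  "uncovered n v V = card (gaps_above n v V) + card (gaps_below v V)"

lemma gaps_above_antimono: "V \<subseteq> V' \<Longrightarrow> gaps_above n v V' \<subseteq> gaps_above n v V"
  unfolding gaps_above_def by auto

lemma gaps_below_antimono: "V \<subseteq> V' \<Longrightarrow> gaps_below v V' \<subseteq> gaps_below v V"
  unfolding gaps_below_def by auto

lemma gaps_above_eq:
  assumes "v \<in> V" "v \<le> n"
  obtains a where "v \<le> a" "a \<le> n" "{v..a} \<subseteq> V" "gaps_above n v V = {a<..n}"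
proof -
  define A where "A = {a. a \<le> n \<and> {v..a} \<subseteq> V}"
  have "finite A" "v \<in> A" using assms by (simp_all add: A_def)
  then have "Max A \<in> A" "v \<le> Max A" by (auto intro!: Max_in Max_ge)
  then obtain a where a: "a \<le> n" "{v..a} \<subseteq> V" "v \<le> a" and a_max: "\<And>w. w \<in> A \<Longrightarrow> w \<le> a"
    using Max_ge[OF \<open>finite A\<close>] unfolding A_def by blast
  have "gaps_above n v V = {a<..n}"
  proof (intro equalityI subsetI)
    fix w assume w: "w \<in> gaps_above n v V"
    then have "\<not> {v..w} \<subseteq> V" by (simp add: gaps_above_def)
    then have "\<not> {v..w} \<subseteq> {v..a}" using a(2) by blast
    then show "w \<in> {a<..n}" using w by (auto simp: gaps_above_def)
  next
    fix w assume w: "w \<in> {a<..n}"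
    then have "w \<notin> A" using a_max by force
    then show "w \<in> gaps_above n v V" using w a by (auto simp: gaps_above_def A_def)
  qed
  then show ?thesis using that a by blast
qed

lemma gaps_below_eq:
  assumes "v \<in> V"
  obtains b where "b \<le> v" "{b..v} \<subseteq> V" "gaps_below v V = {..<b}"
proof -
  define B where "B = {b. b \<le> v \<and> {b..v} \<subseteq> V}"
  have "finite B" "v \<in> B" using assms by (simp_all add: B_def)
  then have "Min B \<in> B" by (auto intro!: Min_in)
  then obtain b where b: "b \<le> v" "{b..v} \<subseteq> V" and b_min: "\<And>w. w \<in> B \<Longrightarrow> b \<le> w"
    using Min_le[OF \<open>finite B\<close>] unfolding B_def by blast
  have "gaps_below v V = {..<b}"
  proof (intro equalityI subsetI)
    fix w assume w: "w \<in> gaps_below v V"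
    then have "\<not> {w..v} \<subseteq> V" by (simp add: gaps_below_def)
    then have "\<not> {w..v} \<subseteq> {b..v}" using b(2) by blast
    then show "w \<in> {..<b}" using w by (auto simp: gaps_below_def)
  next
    fix w assume w: "w \<in> {..<b}"
    then have "w \<notin> B" using b_min by force
    then show "w \<in> gaps_below v V" using w b by (auto simp: gaps_below_def B_def)
  qed
  then show ?thesis using that b by blast
qed

lemma uncovered_le: "v \<le> n \<Longrightarrow> uncovered n v V \<le> n"
proof -
  assume "v \<le> n"
  moreover have "card (gaps_above n v V) \<le> card {v<..n}" by (rule card_mono) (auto simp: gaps_above_def)
  moreover have "card (gaps_below v V) \<le> card {..<v}" by (rule card_mono) (auto simp: gaps_below_def)
  ultimately show ?thesis by (simp add: uncovered_def)
qed

lemma uncovered_eq_0_imp: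
  assumes "v \<in> V" "v \<le> n" "uncovered n v V = 0"
  shows "{0..n} \<subseteq> V"
proof -
  have "finite (gaps_above n v V)" "finite (gaps_below v V)"
    by (rule finite_subset[of _ "{..n}"], auto simp: gaps_above_def gaps_below_def)
  then have "gaps_above n v V = {}" "gaps_below v V = {}" using assms(3) by (auto simp: uncovered_def)
  then show ?thesis using assms(1) unfolding gaps_above_def gaps_below_def
    by (force dest: linorder_neqE_nat)
qed

lemma card_gaps_above_step:
  assumes "V \<subseteq> V'" "{v..a} \<subseteq> V" "gaps_above n v V = {a<..n}"
  shows "card (gaps_above n v V') + of_bool (a < n \<and> a + 1 \<in> V') \<le> n - a"
proof -
  have "gaps_above n v V' \<subseteq> {a<..n} - (if a < n \<and> a + 1 \<in> V' then {a + 1} else {})"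
    using gaps_above_antimono[OF assms(1), of n v] assms(1,2) unfolding assms(3)
    by (auto simp: gaps_above_def le_Suc_eq)
  then have "card (gaps_above n v V') \<le> card ({a<..n} - (if a < n \<and> a + 1 \<in> V' then {a + 1} else {}))"
    by (intro card_mono) auto
  then show ?thesis by (auto split: if_splits)
qed

lemma card_gaps_below_step:
  assumes "V \<subseteq> V'" "{b..v} \<subseteq> V" "gaps_below v V = {..<b}"
  shows "card (gaps_below v V') + of_bool (0 < b \<and> b - 1 \<in> V') \<le> b"
proof -
  have "gaps_below v V' \<subseteq> {..<b} - (if 0 < b \<and> b - 1 \<in> V' then {b - 1} else {})"
    using gaps_below_antimono[OF assms(1), of v] assms(1,2) unfolding assms(3)
    by (auto simp: gaps_below_def) (metis Suc_pred atLeastAtMost_iff le_antisym not_less_eq_eq subsetD)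
  then have "card (gaps_below v V') \<le> card ({..<b} - (if 0 < b \<and> b - 1 \<in> V' then {b - 1} else {}))"
    by (intro card_mono) auto
  then show ?thesis by (auto split: if_splits)
qed

definition log_potential :: "nat \<Rightarrow> nat \<Rightarrow> real" where
  "log_potential n z = (if z = 0 then 0 else 8 * real n * (ln (real z) + 1))"

lemma log_potential_nonneg: "0 \<le> log_potential n z"
  unfolding log_potential_def by auto

lemma log_potential_mono: "z' \<le> z \<Longrightarrow> log_potential n z' \<le> log_potential n z"
  unfolding log_potential_def by (auto intro!: mult_left_mono)

text \<open>The concavity of \<open>ln\<close> converts the multiplicative drift of \<open>z\<close> into an additive drift of
  the potential.\<close>
lemma log_potential_diff_ge:
  assumes "1 \<le> z" "z' \<le> z"
  shows "8 * real n * (real z - real z') / real z \<le> log_potential n z - log_potential n z'"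
proof (cases "z' = 0")
  case True
  have "8 * real n * 1 \<le> 8 * real n * (ln (real z) + 1)" using assms by (intro mult_left_mono) auto
  then show ?thesis using True assms by (simp add: log_potential_def)
next
  case False
  have "ln (real z' / real z) \<le> real z' / real z - 1" using False assms by (intro ln_le_minus_one) auto
  then have "1 - real z' / real z \<le> ln (real z) - ln (real z')" using False assms by (simp add: ln_div)
  then have "8 * real n * (1 - real z' / real z) \<le> 8 * real n * (ln (real z) - ln (real z'))"
    by (intro mult_left_mono) auto
  then show ?thesis using False assms by (simp add: log_potential_def field_simps)
qed

locale oneminmax_nsga2 =
  fixes n N :: nat and mode :: offspring_mode and tb :: tiebreak
  assumes n_pos: "1 \<le> n" and pop_size: "4 * (n + 1) \<le> N" and valid: "valid_tiebreak oneminmax tb"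
begin

abbreviation step :: "nat \<Rightarrow> pop \<Rightarrow> pop pmf" where
  "step t P \<equiv> nsga2_step mode oneminmax N tb t P"

lemma survival_keeps_values:
  assumes "wf_pop n N P" "wf_pop n N Q"
    and "P' \<in> set_pmf (bind_pmf (pmf_of_set (survivor_sets oneminmax N tb t (P @ Q)))
               (\<lambda>A. return_pmf (map (\<lambda>i. (P @ Q) ! i) (sorted_list_of_set A))))"
  shows "wf_pop n N P' \<and> ones_values P \<union> ones_values Q \<subseteq> ones_values P'"
proof -
  define R where "R = P @ Q"
  have lengths: "\<forall>x\<in>set R. length x = n" and "length R = 2 * N"
    using assms(1,2) by (auto simp: wf_pop_def R_def)
  note surv = survivor_sets_keep_ones[OF lengths valid this(2) pop_size, where t=t]
  obtain A where A: "A \<in> survivor_sets oneminmax N tb t R" "P' = map (\<lambda>i. R ! i) (sorted_list_of_set A)"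
    using assms(3) surv(1,2) by (auto simp: R_def)
  note A_props = surv(3)[OF A(1)]
  have "finite A" using A_props finite_subset by blast
  then have P': "set P' = (\<lambda>i. R ! i) ` A" "length P' = N" using A(2) A_props by simp_all
  have "ones_values R \<subseteq> ones_values P'"
  proof
    fix v assume "v \<in> ones_values R"
    then obtain i where "i < length R" "v = ones (R ! i)" by (auto simp: ones_values_def in_set_conv_nth)
    then obtain j where "j \<in> A" "ones (R ! j) = v" using A_props by metis
    then show "v \<in> ones_values P'" using P'(1) by (auto simp: ones_values_def)
  qed
  moreover have "\<forall>x\<in>set P'. length x = n" using P'(1) A_props lengths by auto
  ultimately show ?thesis using P'(2) by (auto simp: wf_pop_def ones_values_def R_def)
qed

lemma step_keeps_values:
  assumes "wf_pop n N P" "P' \<in> set_pmf (step t P)"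
  shows "wf_pop n N P' \<and> ones_values P \<subseteq> ones_values P'"
proof -
  obtain Q where Q: "Q \<in> set_pmf (offspring mode P)"
    "P' \<in> set_pmf (bind_pmf (pmf_of_set (survivor_sets oneminmax N tb t (P @ Q)))
               (\<lambda>A. return_pmf (map (\<lambda>i. (P @ Q) ! i) (sorted_list_of_set A))))"
    using assms(2) unfolding nsga2_step_def by auto
  have "wf_pop n N Q" using wf_pop_offspring[OF assms(1) _ Q(1)] pop_size by simp
  then show ?thesis using survival_keeps_values[OF assms(1) _ Q(2)] by blast
qed

text \<open>Each mutation operator flips a given bit alone with probability at least \<open>1/(4n)\<close>, and
  resampling the parents loses at most a factor of two.\<close>
lemma measure_offspring_flip:
  assumes "wf_pop n N P" "x0 \<in> set P" "single_flips x0 b \<subseteq> E"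
  shows "real (card {j. j < n \<and> x0 ! j = b}) / (8 * real n)
           \<le> measure (offspring mode P) {Q. \<exists>y\<in>set Q. y \<in> E}"
proof -
  define r where "r = real (card {j. j < n \<and> x0 ! j = b}) / (4 * real n)"
  have x0: "length x0 = n" using assms(1,2) by (auto simp: wf_pop_def)
  have "card {j. j < n \<and> x0 ! j = b} \<le> n"
    using card_mono[of "{..<n}" "{j. j < n \<and> x0 ! j = b}"] by auto
  then have r: "0 \<le> r" "r \<le> 1" using n_pos by (auto simp: r_def field_simps)
  have mut: "r \<le> measure (one_bit_mut x0) E" "r \<le> measure (bitwise_mut x0) E"
    unfolding r_def by (auto intro!: measure_mutation_ge[OF _ x0 n_pos assms(3)])
  have "length P = N" using assms(1) by (simp add: wf_pop_def)
  then have "r / 2 \<le> measure (offspring mode P) {Q. \<exists>y\<in>set Q. y \<in> E}"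
  proof (cases mode)
    case OneBitEach
    then show ?thesis using measure_indep_list_ex_ge[where g=one_bit_mut, OF assms(2) mut(1)] r(1) by simp
  next
    case BitwiseEach
    then show ?thesis using measure_indep_list_ex_ge[where g=bitwise_mut, OF assms(2) mut(2)] r(1) by simp
  next
    case OneBitRandom
    then show ?thesis using measure_resample_ex_ge[where mut=one_bit_mut, OF assms(2) _ mut(1) r] \<open>length P = N\<close> by simp
  next
    case BitwiseRandom
    then show ?thesis using measure_resample_ex_ge[where mut=bitwise_mut, OF assms(2) _ mut(2) r] \<open>length P = N\<close> by simp
  qed
  then show ?thesis by (simp add: r_def)
qed

lemma measure_step_gains_value:
  assumes "wf_pop n N P" "x0 \<in> set P" "single_flips x0 b \<subseteq> {y. ones y = w}"
  shows "real (card {j. j < n \<and> x0 ! j = b}) / (8 * real n)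
           \<le> measure (step t P) {P'. w \<in> ones_values P'}"
proof -
  have "real (card {j. j < n \<and> x0 ! j = b}) / (8 * real n)
      \<le> measure (offspring mode P) {Q. \<exists>y\<in>set Q. y \<in> {y. ones y = w}}"
    by (rule measure_offspring_flip[OF assms])
  also have "\<dots> \<le> measure (step t P) {P'. w \<in> ones_values P'}"
    unfolding nsga2_step_def
  proof (rule measure_bind_pmf_ge, intro ballI impI)
    fix Q assume Q: "Q \<in> set_pmf (offspring mode P)" "Q \<in> {Q. \<exists>y\<in>set Q. y \<in> {y. ones y = w}}"
    have "wf_pop n N Q" using wf_pop_offspring[OF assms(1) _ Q(1)] pop_size by simp
    moreover have "w \<in> ones_values Q" using Q(2) by (auto simp: ones_values_def)
    ultimately show "set_pmf (bind_pmf (pmf_of_set (survivor_sets oneminmax N tb t (P @ Q)))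
        (\<lambda>A. return_pmf (map (\<lambda>i. (P @ Q) ! i) (sorted_list_of_set A)))) \<subseteq> {P'. w \<in> ones_values P'}"
      using survival_keeps_values[OF assms(1)] by blast
  qed
  finally show ?thesis .
qed

section \<open>Drift\<close>

lemma exists_ones_value:
  assumes "wf_pop n N P" "w \<in> ones_values P"
  obtains x where "x \<in> set P" "length x = n" "ones x = w"
  using assms that by (auto simp: wf_pop_def ones_values_def)

lemma measure_step_gains_above:
  assumes P: "wf_pop n N P" and "a \<in> ones_values P" "a < n"
  shows "real (n - a) / (8 * real n) \<le> measure (step t P) {P'. a + 1 \<in> ones_values P'}"
proof -
  obtain x0 where x0: "x0 \<in> set P" "length x0 = n" "ones x0 = a"
    using exists_ones_value[OF P assms(2)] .
  have "single_flips x0 False \<subseteq> {y. ones y = a + 1}" using ones_single_flips(1)[of x0] x0 by simp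
  from measure_step_gains_value[OF P x0(1) this, where t=t]
  show ?thesis using card_zeros[of x0] x0 by simp
qed

lemma measure_step_gains_below:
  assumes P: "wf_pop n N P" and "b \<in> ones_values P" "0 < b"
  shows "real b / (8 * real n) \<le> measure (step t P) {P'. b - 1 \<in> ones_values P'}"
proof -
  obtain x0 where x0: "x0 \<in> set P" "length x0 = n" "ones x0 = b"
    using exists_ones_value[OF P assms(2)] .
  have "single_flips x0 True \<subseteq> {y. ones y = b - 1}" using ones_single_flips(2)[of x0] x0 by auto
  from measure_step_gains_value[OF P x0(1) this, where t=t]
  show ?thesis using ones_eq_card[of x0] x0 by simp
qed

text \<open>The events \<open>A\<close> and \<open>B\<close> that the interval of present values around \<open>v\<close> grows at its upper
  and at its lower end.\<close>
lemma uncovered_drift: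
  assumes P: "wf_pop n N P" and v: "v \<in> ones_values P" "v \<le> n"
  obtains A B where
    "\<forall>P'\<in>set_pmf (step t P). real (uncovered n v (ones_values P')) + indicator A P' + indicator B P'
        \<le> real (uncovered n v (ones_values P))"
    "real (uncovered n v (ones_values P)) / (8 * real n) \<le> measure (step t P) A + measure (step t P) B"
proof -
  obtain a where a: "v \<le> a" "a \<le> n" "{v..a} \<subseteq> ones_values P" "gaps_above n v (ones_values P) = {a<..n}"
    using gaps_above_eq[OF v] .
  obtain b where b: "b \<le> v" "{b..v} \<subseteq> ones_values P" "gaps_below v (ones_values P) = {..<b}"
    using gaps_below_eq[OF v(1)] .
  define A where "A = {P'. a < n \<and> a + 1 \<in> ones_values P'}"
  define B where "B = {P'. 0 < b \<and> b - 1 \<in> ones_values P'}"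
  have z: "uncovered n v (ones_values P) = (n - a) + b" by (simp add: uncovered_def a(4) b(3))
  have decrease: "real (uncovered n v (ones_values P')) + indicator A P' + indicator B P'
      \<le> real (uncovered n v (ones_values P))" if "P' \<in> set_pmf (step t P)" for P'
  proof -
    have "ones_values P \<subseteq> ones_values P'" using step_keeps_values[OF P that] by blast
    from card_gaps_above_step[OF this a(3,4)] card_gaps_below_step[OF this b(2,3)]
    have "uncovered n v (ones_values P') + of_bool (P' \<in> A) + of_bool (P' \<in> B) \<le> (n - a) + b"
      by (simp add: uncovered_def A_def B_def)
    then show ?thesis unfolding z by (auto simp: indicator_def split: if_splits)
  qed
  have "real (n - a) / (8 * real n) \<le> measure (step t P) A"
    using measure_step_gains_above[OF P, of a t] a(1,3) by (cases "a < n") (auto simp: A_def)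
  moreover have "real b / (8 * real n) \<le> measure (step t P) B"
    using measure_step_gains_below[OF P, of b t] b(1,2) by (cases "0 < b") (auto simp: B_def)
  moreover have "real (uncovered n v (ones_values P)) / (8 * real n) = real (n - a) / (8 * real n) + real b / (8 * real n)"
    using z a(2) by (simp add: diff_divide_distrib add_divide_distrib)
  ultimately have "real (uncovered n v (ones_values P)) / (8 * real n)
      \<le> measure (step t P) A + measure (step t P) B" by linarith
  with decrease show ?thesis using that by blast
qed

lemma expected_uncovered_step:
  assumes "wf_pop n N P" "v \<in> ones_values P" "v \<le> n"
  shows "(\<integral>P'. real (uncovered n v (ones_values P')) \<partial>step t P)
           \<le> (1 - 1 / (8 * real n)) * real (uncovered n v (ones_values P))"
proof -
  obtain A B where AB:
    "\<forall>P'\<in>set_pmf (step t P). real (uncovered n v (ones_values P')) + 1 * indicator A P' + 1 * indicator B P'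
        \<le> real (uncovered n v (ones_values P))"
    "real (uncovered n v (ones_values P)) / (8 * real n) \<le> measure (step t P) A + measure (step t P) B"
    using uncovered_drift[OF assms] by auto
  have "\<forall>P'\<in>set_pmf (step t P). \<bar>real (uncovered n v (ones_values P'))\<bar> \<le> real n"
    using uncovered_le[OF assms(3)] by simp
  from integral_le_minus_measures[OF AB(1) this] AB(2) show ?thesis by (simp add: algebra_simps)
qed

lemma expected_log_potential_step:
  assumes "wf_pop n N P" "v \<in> ones_values P" "v \<le> n" "1 \<le> uncovered n v (ones_values P)"
  shows "(\<integral>P'. log_potential n (uncovered n v (ones_values P')) \<partial>step t P)
           \<le> log_potential n (uncovered n v (ones_values P)) - 1"
proof -
  define z where "z = uncovered n v (ones_values P)"
  define c where "c = 8 * real n / real z"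
  have c: "0 \<le> c" "c * (real z / (8 * real n)) = 1" using assms(4) n_pos by (simp_all add: c_def z_def)
  obtain A B where AB:
    "\<forall>P'\<in>set_pmf (step t P). real (uncovered n v (ones_values P')) + indicator A P' + indicator B P' \<le> real z"
    "real z / (8 * real n) \<le> measure (step t P) A + measure (step t P) B"
    using uncovered_drift[OF assms(1-3)] unfolding z_def by blast
  have "log_potential n (uncovered n v (ones_values P')) + c * indicator A P' + c * indicator B P'
      \<le> log_potential n z" if "P' \<in> set_pmf (step t P)" for P'
  proof -
    define z' where "z' = uncovered n v (ones_values P')"
    have drop: "indicator A P' + indicator B P' \<le> real z - real z'"
      using AB(1)[rule_format, OF that] by (simp add: z'_def)
    moreover have "0 \<le> indicator A P' + (indicator B P' :: real)" by simp
    ultimately have "z' \<le> z" by linarith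
    then have "c * (real z - real z') \<le> log_potential n z - log_potential n z'"
      using log_potential_diff_ge[of z z' n] assms(4) by (simp add: c_def z_def)
    moreover have "c * (indicator A P' + indicator B P') \<le> c * (real z - real z')"
      using drop c(1) by (rule mult_left_mono)
    ultimately show ?thesis by (simp add: z'_def algebra_simps)
  qed
  moreover have "\<forall>P'\<in>set_pmf (step t P). \<bar>log_potential n (uncovered n v (ones_values P'))\<bar> \<le> log_potential n n"
    using log_potential_nonneg log_potential_mono uncovered_le[OF assms(3)] by simp
  ultimately have "(\<integral>P'. log_potential n (uncovered n v (ones_values P')) \<partial>step t P)
      + c * (measure (step t P) A + measure (step t P) B) \<le> log_potential n z"
    by (intro integral_le_minus_measures) auto
  moreover have "1 \<le> c * (measure (step t P) A + measure (step t P) B)"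
    using mult_left_mono[OF AB(2) c(1)] unfolding c(2) .
  ultimately show ?thesis by (simp add: z_def)
qed

end

lemma wf_pop_init_pop: "P \<in> set_pmf (init_pop n N) \<Longrightarrow> wf_pop n N P"
proof -
  assume P: "P \<in> set_pmf (init_pop n N)"
  have "finite {x :: bits. length x = n}" using finite_lists_length_eq[of "UNIV :: bool set" n] by simp
  moreover have "{x :: bits. length x = n} \<noteq> {}" by (auto intro: exI[of _ "replicate n False"])
  ultimately have "set_pmf (random_bits n) = {x. length x = n}" by (simp add: random_bits_def)
  then show ?thesis using set_pmf_indep_list[of P "\<lambda>_. random_bits n" "[0..<N]"] P
    by (auto simp: init_pop_def wf_pop_def in_set_conv_nth)
qed

lemma covers_front_if_values:
  assumes "wf_pop n N P" "{0..n} \<subseteq> ones_values P"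
  shows "covers_front n P"
  unfolding covers_front_def
proof (intro allI impI)
  fix k assume "k \<le> n"
  then have "n - k \<in> ones_values P" using assms(2) by auto
  then obtain x where x: "x \<in> set P" "ones x = n - k" by (auto simp: ones_values_def)
  then have "oneminmax x = (real k, real (n - k))"
    using assms(1) \<open>k \<le> n\<close> by (auto simp: oneminmax_def ones_def[symmetric] wf_pop_def)
  then show "(real k, real (n - k)) \<in> oneminmax ` set P" using x by force
qed

text \<open>The anchor of a run is the number of ones of the first initial individual; this value is
  present in every later population.\<close>
definition anchor :: "pop list \<Rightarrow> nat" where
  "anchor h = ones (hd (hd h))"

definition uncovered_hist :: "nat \<Rightarrow> pop list \<Rightarrow> nat" where
  "uncovered_hist n h = uncovered n (anchor h) (ones_values (last h))"

definition ever_covered :: "nat \<Rightarrow> pop list \<Rightarrow> bool" where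
  "ever_covered n h \<longleftrightarrow> (\<exists>s<length h. covers_front n (h ! s))"

lemma ever_covered_snoc: "ever_covered n (h @ [P']) \<longleftrightarrow> ever_covered n h \<or> covers_front n P'"
proof
  assume "ever_covered n (h @ [P'])"
  then obtain s where "s < Suc (length h)" "covers_front n ((h @ [P']) ! s)"
    by (auto simp: ever_covered_def)
  then show "ever_covered n h \<or> covers_front n P'"
    by (cases "s < length h") (auto simp: ever_covered_def nth_append)
next
  assume "ever_covered n h \<or> covers_front n P'"
  then show "ever_covered n (h @ [P'])"
  proof
    assume "ever_covered n h"
    then obtain s where "s < length h" "covers_front n (h ! s)" by (auto simp: ever_covered_def)
    then show ?thesis unfolding ever_covered_def by (intro exI[of _ s]) (simp add: nth_append)
  next
    assume "covers_front n P'"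
    then show ?thesis unfolding ever_covered_def by (intro exI[of _ "length h"]) simp
  qed
qed

lemma T_trunc_eq_first_cover:
  assumes "s1 < length h" "covers_front n (h ! s1)" "\<forall>s<s1. \<not> covers_front n (h ! s)"
  shows "T_trunc n h = s1"
  unfolding T_trunc_def
proof (rule Least_equality)
  fix s assume "s = length h - 1 \<or> covers_front n (h ! s)"
  then show "s1 \<le> s" using assms by (cases "s < s1") auto
qed (use assms in simp)

lemma T_trunc_not_covered:
  assumes "\<not> ever_covered n h"
  shows "T_trunc n h = length h - 1"
  unfolding T_trunc_def
proof (rule Least_equality)
  fix s assume "s = length h - 1 \<or> covers_front n (h ! s)"
  then show "length h - 1 \<le> s" using assms by (cases "s < length h") (auto simp: ever_covered_def)
qed simp

lemma T_trunc_snoc_covered: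
  assumes "ever_covered n h"
  shows "T_trunc n (h @ [P']) = T_trunc n h"
proof -
  have "\<exists>s. s < length h \<and> covers_front n (h ! s)" using assms by (auto simp: ever_covered_def)
  then obtain s1 where "s1 < length h \<and> covers_front n (h ! s1)"
    and "\<forall>s<s1. \<not> (s < length h \<and> covers_front n (h ! s))"
    using exists_least_iff[of "\<lambda>s. s < length h \<and> covers_front n (h ! s)", THEN iffD1] by blast
  then have s1: "s1 < length h" "covers_front n (h ! s1)" "\<forall>s<s1. \<not> covers_front n (h ! s)"
    by simp_all
  then have "T_trunc n h = s1" by (rule T_trunc_eq_first_cover)
  moreover have "T_trunc n (h @ [P']) = s1"
    using s1 by (intro T_trunc_eq_first_cover) (auto simp: nth_append)
  ultimately show ?thesis by simp
qed

lemma T_trunc_snoc_not_covered: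
  assumes "\<not> ever_covered n h"
  shows "T_trunc n (h @ [P']) = length h"
  unfolding T_trunc_def
proof (rule Least_equality)
  fix s assume "s = length (h @ [P']) - 1 \<or> covers_front n ((h @ [P']) ! s)"
  then show "length h \<le> s" using assms by (cases "s < length h") (auto simp: ever_covered_def nth_append)
qed simp

context oneminmax_nsga2
begin

abbreviation hist :: "nat \<Rightarrow> pop list pmf" where
  "hist t \<equiv> nsga2_hist mode oneminmax n N tb t"

lemma set_pmf_hist:
  "h \<in> set_pmf (hist t) \<Longrightarrow>
     length h = Suc t \<and> wf_pop n N (hd h) \<and> wf_pop n N (last h) \<and> ones_values (hd h) \<subseteq> ones_values (last h)"
proof (induction t arbitrary: h)
  case 0
  then show ?case using wf_pop_init_pop by auto
next
  case (Suc t)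
  then obtain h0 P' where h: "h0 \<in> set_pmf (hist t)" "P' \<in> set_pmf (step t (last h0))" "h = h0 @ [P']"
    by auto
  then have "h0 \<noteq> []" using Suc.IH[OF h(1)] by auto
  then show ?case using Suc.IH[OF h(1)] h step_keeps_values[OF _ h(2)] by auto
qed

lemma anchor_in_values:
  assumes "h \<in> set_pmf (hist t)"
  shows "anchor h \<in> ones_values (last h)" "anchor h \<le> n"
proof -
  note inv = set_pmf_hist[OF assms]
  then have "hd h \<noteq> []" using pop_size by (auto simp: wf_pop_def)
  then have "hd (hd h) \<in> set (hd h)" by simp
  then show "anchor h \<in> ones_values (last h)" "anchor h \<le> n"
    using inv ones_le_length by (fastforce simp: anchor_def ones_values_def wf_pop_def)+
qed

lemma uncovered_hist_pos:
  assumes "h \<in> set_pmf (hist t)" "\<not> covers_front n (last h)"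
  shows "1 \<le> uncovered_hist n h"
  using uncovered_eq_0_imp[OF anchor_in_values[OF assms(1)]] set_pmf_hist[OF assms(1)]
    covers_front_if_values assms(2)
  unfolding uncovered_hist_def by (metis One_nat_def Suc_leI neq0_conv)

lemma expected_uncovered_hist_snoc:
  assumes h: "h \<in> set_pmf (hist t)"
  shows "(\<integral>\<^sup>+P'. ennreal (real (uncovered_hist n (h @ [P']))) \<partial>step t (last h))
           \<le> ennreal (1 - 1 / (8 * real n)) * ennreal (real (uncovered_hist n h))"
proof -
  have c: "0 \<le> 1 - 1 / (8 * real n)" using n_pos by (simp add: field_simps)
  have "h \<noteq> []" using set_pmf_hist[OF h] by auto
  then have snoc: "uncovered_hist n (h @ [P']) = uncovered n (anchor h) (ones_values P')" for P'
    by (simp add: uncovered_hist_def anchor_def)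
  have "integrable (step t (last h)) (\<lambda>P'. real (uncovered n (anchor h) (ones_values P')))"
    using uncovered_le[OF anchor_in_values(2)[OF h]]
    by (intro measure_pmf.integrable_const_bound[where B="real n"]) auto
  then have "(\<integral>\<^sup>+P'. ennreal (real (uncovered_hist n (h @ [P']))) \<partial>step t (last h))
      = ennreal (\<integral>P'. real (uncovered n (anchor h) (ones_values P')) \<partial>step t (last h))"
    unfolding snoc by (rule nn_integral_eq_integral) auto
  also have "\<dots> \<le> ennreal ((1 - 1 / (8 * real n)) * real (uncovered_hist n h))"
    using expected_uncovered_step[OF _ anchor_in_values[OF h]] set_pmf_hist[OF h]
    by (intro ennreal_leI) (simp add: uncovered_hist_def)
  finally show ?thesis using c by (simp add: ennreal_mult)
qed

lemma expected_uncovered_hist: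
  "(\<integral>\<^sup>+h. ennreal (real (uncovered_hist n h)) \<partial>hist t) \<le> ennreal (real n * (1 - 1 / (8 * real n)) ^ t)"
proof (induction t)
  case 0
  have "(\<integral>\<^sup>+h. ennreal (real (uncovered_hist n h)) \<partial>hist 0) \<le> (\<integral>\<^sup>+h. ennreal (real n) \<partial>hist 0)"
  proof (intro nn_integral_mono_AE AE_pmfI)
    fix h assume "h \<in> set_pmf (hist 0)"
    then have "uncovered_hist n h \<le> n"
      unfolding uncovered_hist_def by (rule uncovered_le[OF anchor_in_values(2)])
    then show "ennreal (real (uncovered_hist n h)) \<le> ennreal (real n)" by simp
  qed
  then show ?case by (simp add: measure_pmf.emeasure_space_1)
next
  case (Suc t)
  define c where "c = 1 - 1 / (8 * real n)"
  have c: "0 \<le> c" using n_pos by (simp add: c_def field_simps)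
  have "(\<integral>\<^sup>+h. ennreal (real (uncovered_hist n h)) \<partial>hist (Suc t)) =
      (\<integral>\<^sup>+h. (\<integral>\<^sup>+P'. ennreal (real (uncovered_hist n (h @ [P']))) \<partial>step t (last h)) \<partial>hist t)"
    by (simp only: nsga2_hist.simps(2) nn_integral_bind_pmf nn_integral_map_pmf)
  also have "\<dots> \<le> (\<integral>\<^sup>+h. ennreal c * ennreal (real (uncovered_hist n h)) \<partial>hist t)"
    unfolding c_def by (intro nn_integral_mono_AE AE_pmfI expected_uncovered_hist_snoc)
  also have "\<dots> = ennreal c * (\<integral>\<^sup>+h. ennreal (real (uncovered_hist n h)) \<partial>hist t)"
    by (rule nn_integral_cmult) simp
  also have "\<dots> \<le> ennreal c * ennreal (real n * c ^ t)" using Suc.IH by (intro mult_left_mono) (auto simp: c_def)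
  also have "\<dots> = ennreal (real n * c ^ Suc t)" using c by (simp add: ennreal_mult[symmetric] algebra_simps)
  finally show ?case by (simp add: c_def)
qed

text \<open>Elapsed time plus the remaining-time potential; its expectation does not increase.\<close>
definition time_potential :: "pop list \<Rightarrow> real" where
  "time_potential h = real (T_trunc n h) + (if ever_covered n h then 0 else log_potential n (uncovered_hist n h))"

lemma expected_time_potential_snoc:
  assumes h: "h \<in> set_pmf (hist t)"
  shows "(\<integral>\<^sup>+P'. ennreal (time_potential (h @ [P'])) \<partial>step t (last h)) \<le> ennreal (time_potential h)"
proof (cases "ever_covered n h")
  case True
  then have "time_potential (h @ [P']) = time_potential h" for P'
    by (simp add: time_potential_def T_trunc_snoc_covered ever_covered_snoc)
  then show ?thesis by (simp add: measure_pmf.emeasure_space_1)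
next
  case False
  note inv = set_pmf_hist[OF h] and anchor = anchor_in_values[OF h]
  define pot where "pot = (\<lambda>P'. log_potential n (uncovered n (anchor h) (ones_values P')))"
  have "h \<noteq> []" using inv by auto
  then have snoc: "time_potential (h @ [P']) \<le> real (Suc t) + pot P'" for P'
    using False inv log_potential_nonneg
    by (simp add: time_potential_def T_trunc_snoc_not_covered[OF False] ever_covered_snoc pot_def
        uncovered_hist_def anchor_def)
  have "\<not> covers_front n (last h)"
    using False \<open>h \<noteq> []\<close> by (auto simp: ever_covered_def last_conv_nth)
  then have pos: "1 \<le> uncovered n (anchor h) (ones_values (last h))"
    using uncovered_hist_pos[OF h] by (simp add: uncovered_hist_def)
  have int: "integrable (step t (last h)) pot"
    unfolding pot_def using log_potential_nonneg log_potential_mono uncovered_le[OF anchor(2)]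
    by (intro measure_pmf.integrable_const_bound[where B="log_potential n n"]) auto
  have "(\<integral>\<^sup>+P'. ennreal (time_potential (h @ [P'])) \<partial>step t (last h))
      \<le> (\<integral>\<^sup>+P'. ennreal (real (Suc t) + pot P') \<partial>step t (last h))"
    using snoc by (intro nn_integral_mono ennreal_leI)
  also have "\<dots> = ennreal (real (Suc t) + (\<integral>P'. pot P' \<partial>step t (last h)))"
    using int by (subst nn_integral_eq_integral) (auto simp: pot_def log_potential_nonneg add_nonneg_nonneg)
  also have "\<dots> \<le> ennreal (real (Suc t) + (pot (last h) - 1))"
    using expected_log_potential_step[OF _ anchor pos, of t] inv by (intro ennreal_leI) (simp add: pot_def)
  also have "\<dots> = ennreal (time_potential h)"
    using False inv by (simp add: time_potential_def T_trunc_not_covered pot_def uncovered_hist_def)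
  finally show ?thesis .
qed

lemma expected_time_potential_le:
  "(\<integral>\<^sup>+h. ennreal (time_potential h) \<partial>hist t) \<le> ennreal (8 * real n * (ln (real n) + 1))"
proof (induction t)
  case 0
  have "time_potential h \<le> 8 * real n * (ln (real n) + 1)" if h: "h \<in> set_pmf (hist 0)" for h
  proof -
    have "length h = 1" using set_pmf_hist[OF h] by simp
    then have "T_trunc n h = 0" unfolding T_trunc_def by (intro Least_equality) auto
    moreover have "uncovered_hist n h \<le> n"
      unfolding uncovered_hist_def by (rule uncovered_le[OF anchor_in_values(2)[OF h]])
    then have "log_potential n (uncovered_hist n h) \<le> log_potential n n" by (rule log_potential_mono)
    ultimately show ?thesis using n_pos log_potential_nonneg[of n "uncovered_hist n h"]
      by (simp add: time_potential_def log_potential_def)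
  qed
  then have "(\<integral>\<^sup>+h. ennreal (time_potential h) \<partial>hist 0) \<le> (\<integral>\<^sup>+h. ennreal (8 * real n * (ln (real n) + 1)) \<partial>hist 0)"
    by (intro nn_integral_mono_AE AE_pmfI ennreal_leI)
  then show ?case by (simp add: measure_pmf.emeasure_space_1)
next
  case (Suc t)
  have "(\<integral>\<^sup>+h. ennreal (time_potential h) \<partial>hist (Suc t))
      = (\<integral>\<^sup>+h. (\<integral>\<^sup>+P'. ennreal (time_potential (h @ [P'])) \<partial>step t (last h)) \<partial>hist t)"
    by (simp only: nsga2_hist.simps(2) nn_integral_bind_pmf nn_integral_map_pmf)
  also have "\<dots> \<le> (\<integral>\<^sup>+h. ennreal (time_potential h) \<partial>hist t)"
    by (intro nn_integral_mono_AE AE_pmfI expected_time_potential_snoc)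
  finally show ?case using Suc.IH by (rule order_trans)
qed

lemma expected_T_le: "expected_T mode n N tb \<le> ennreal (8 * real n * (ln (real n) + 1))"
  unfolding expected_T_def
proof (rule SUP_least)
  fix t
  have "(\<integral>\<^sup>+h. ennreal (real (T_trunc n h)) \<partial>hist t) \<le> (\<integral>\<^sup>+h. ennreal (time_potential h) \<partial>hist t)"
    by (intro nn_integral_mono ennreal_leI) (simp add: time_potential_def log_potential_nonneg)
  then show "(\<integral>\<^sup>+h. ennreal (real (T_trunc n h)) \<partial>hist t) \<le> ennreal (8 * real n * (ln (real n) + 1))"
    using expected_time_potential_le by (rule order_trans)
qed

lemma measure_hist_not_covered_at:
  "measure (hist (Suc t)) {h. \<not> covers_front n (h ! t)} = measure (hist t) {h. \<not> covers_front n (last h)}"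
proof -
  have "measure (map_pmf (\<lambda>P'. h @ [P']) (step t (last h))) {h. \<not> covers_front n (h ! t)}
      = indicator {h. \<not> covers_front n (last h)} h" if "h \<in> set_pmf (hist t)" for h
  proof -
    have "length h = Suc t" using set_pmf_hist[OF that] by simp
    then have "(h @ [P']) ! t = last h" for P' by (cases h rule: rev_cases) (auto simp: nth_append)
    then show ?thesis by (simp add: indicator_def vimage_def)
  qed
  then have "(\<integral>h. measure (map_pmf (\<lambda>P'. h @ [P']) (step t (last h))) {h. \<not> covers_front n (h ! t)} \<partial>hist t)
      = (\<integral>h. indicator {h. \<not> covers_front n (last h)} h \<partial>hist t)"
    by (intro integral_cong_AE AE_pmfI) auto
  then show ?thesis by (simp only: nsga2_hist.simps(2) measure_bind_pmf) simp
qed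

text \<open>Markov's inequality for the potential, which is at least one unless the front is covered.\<close>
lemma measure_last_not_covered_le:
  "measure (hist t) {h. \<not> covers_front n (last h)} \<le> real n * (1 - 1 / (8 * real n)) ^ t"
proof -
  have "emeasure (hist t) {h. \<not> covers_front n (last h)}
      = (\<integral>\<^sup>+h. indicator {h. \<not> covers_front n (last h)} h \<partial>hist t)" by simp
  also have "\<dots> \<le> (\<integral>\<^sup>+h. ennreal (real (uncovered_hist n h)) \<partial>hist t)"
    using uncovered_hist_pos by (intro nn_integral_mono_AE AE_pmfI) (auto simp: indicator_def)
  also have "\<dots> \<le> ennreal (real n * (1 - 1 / (8 * real n)) ^ t)" by (rule expected_uncovered_hist)
  finally show ?thesis using n_pos by (simp add: measure_pmf.emeasure_eq_measure ennreal_le_iff)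
qed

lemma prob_T_ge_le:
  assumes "1 \<le> m"
  shows "prob_T_ge mode n N tb m \<le> real n * (1 - 1 / (8 * real n)) ^ (m - 1)"
proof -
  obtain t where m: "m = Suc t" using assms by (cases m) auto
  have "prob_T_ge mode n N tb m \<le> measure (hist (Suc t)) {h. \<not> covers_front n (h ! t)}"
    unfolding prob_T_ge_def m by (rule measure_pmf.finite_measure_mono) auto
  also have "\<dots> \<le> real n * (1 - 1 / (8 * real n)) ^ t"
    unfolding measure_hist_not_covered_at by (rule measure_last_not_covered_le)
  finally show ?thesis using m by simp
qed

end

lemma eight_le_runtime_constant: "8 \<le> 2 * exp 1 ^ 2 / (exp 1 - (1::real))"
proof -
  have "0 \<le> 2 * (exp 1 - 2::real)\<^sup>2" by simp
  then have "8 * (exp 1 - 1) \<le> (2 * exp 1 ^ 2 :: real)" by (simp add: power2_eq_square algebra_simps)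
  then show ?thesis by (simp add: field_simps)
qed

lemma one_minus_power_le_exp:
  assumes "0 \<le> c" "c \<le> (1::real)"
  shows "(1 - c) ^ k \<le> exp (- (c * real k))"
proof -
  have "(1 - c) ^ k \<le> exp (- c) ^ k"
    using assms exp_ge_add_one_self[of "- c"] by (intro power_mono) auto
  then show ?thesis by (simp add: exp_of_nat_mult[symmetric] mult.commute)
qed

text \<open>After \<open>m \<ge> 8 (1 + \<delta>) n ln n\<close> iterations, the bound \<open>n (1 - 1/(8n))^(m-1)\<close> on the failure probability
  is at most \<open>n \<cdot> n^{-(1+\<delta>)} e^{1/(8n)} \<le> 2 n^{-\<delta>}\<close>.\<close>
lemma failure_bound_le:
  fixes n :: nat and K \<delta> :: real
  assumes n: "2 \<le> n" and \<delta>: "0 \<le> \<delta>" and K: "8 \<le> K"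
  defines "m \<equiv> nat \<lceil>K * (1 + \<delta>) * real n * ln (real n)\<rceil>"
  shows "1 \<le> m" "real n * (1 - 1 / (8 * real n)) ^ (m - 1) \<le> 2 * real n powr (- \<delta>)"
proof -
  define L where "L = ln (real n)"
  define c where "c = 1 / (8 * real n)"
  have L: "0 < L" "exp L = real n" using n by (simp_all add: L_def)
  have c: "0 < c" "c \<le> 1 / 2" using n by (auto simp: c_def field_simps)
  have "8 * ((1 + \<delta>) * real n * L) \<le> K * ((1 + \<delta>) * real n * L)"
    using K \<delta> L by (intro mult_right_mono) auto
  then have scaled: "(1 + \<delta>) * L \<le> c * (K * (1 + \<delta>) * real n * L)"
    using n by (simp add: c_def field_simps)
  have pos: "0 < K * (1 + \<delta>) * real n * L" using K \<delta> L n by simp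
  have "K * (1 + \<delta>) * real n * L \<le> real m" unfolding m_def L_def by (rule real_nat_ceiling_ge)
  then have "c * (K * (1 + \<delta>) * real n * L) \<le> c * real m" using c(1) by (intro mult_left_mono) auto
  with scaled have m: "(1 + \<delta>) * L \<le> c * real m" by linarith
  show "1 \<le> m" using pos unfolding m_def L_def by linarith
  have "real n * (1 - c) ^ (m - 1) \<le> exp L * exp (- (c * real (m - 1)))"
    unfolding L(2) using one_minus_power_le_exp[of c "m - 1"] c by (intro mult_left_mono) auto
  also have "\<dots> \<le> exp L * exp (- ((1 + \<delta>) * L - c))"
  proof -
    have "c * real (m - 1) = c * real m - c" using \<open>1 \<le> m\<close> by (simp add: of_nat_diff right_diff_distrib)
    then show ?thesis using m by simp
  qed
  also have "\<dots> = exp (- \<delta> * L) * exp c" by (simp flip: exp_add) (simp add: algebra_simps)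
  also have "exp (- \<delta> * L) = real n powr (- \<delta>)" using n by (simp add: powr_def L_def)
  also have "real n powr (- \<delta>) * exp c \<le> real n powr (- \<delta>) * 2"
    using exp_bound_half[of c] c by (intro mult_left_mono) auto
  finally show "real n * (1 - 1 / (8 * real n)) ^ (m - 1) \<le> 2 * real n powr (- \<delta>)"
    by (simp add: c_def mult.commute)
qed

theorem theorem2:
  fixes n N :: nat and mode :: offspring_mode and tb :: tiebreak
  assumes "n \<ge> 1" and "N \<ge> 4 * (n + 1)" and "valid_tiebreak oneminmax tb"
  shows "expected_T mode n N tb \<le> ennreal (2 * exp 1 ^ 2 / (exp 1 - 1) * real n * (ln (real n) + 1)) \<and>
         (\<forall>\<delta>::real. \<delta> \<ge> 0 \<longrightarrow>
           prob_T_ge mode n N tb (nat \<lceil>2 * exp 1 ^ 2 * (1 + \<delta>) / (exp 1 - 1) * real n * ln (real n)\<rceil>)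
             \<le> 2 * real n powr (- \<delta>))"
proof (intro conjI allI impI)
  interpret oneminmax_nsga2 n N mode tb using assms by unfold_locales
  define K :: real where "K = 2 * exp 1 ^ 2 / (exp 1 - 1)"
  have K: "8 \<le> K" unfolding K_def by (rule eight_le_runtime_constant)
  have "expected_T mode n N tb \<le> ennreal (8 * (real n * (ln (real n) + 1)))"
    using expected_T_le by (simp add: mult.assoc)
  also have "\<dots> \<le> ennreal (K * (real n * (ln (real n) + 1)))"
    using K n_pos by (intro ennreal_leI mult_right_mono) auto
  finally show "expected_T mode n N tb \<le> ennreal (2 * exp 1 ^ 2 / (exp 1 - 1) * real n * (ln (real n) + 1))"
    by (simp add: K_def mult.assoc)
  fix \<delta> :: real assume "\<delta> \<ge> 0"
  have m: "2 * exp 1 ^ 2 * (1 + \<delta>) / (exp 1 - 1) * real n * ln (real n) = K * (1 + \<delta>) * real n * ln (real n)"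
    by (simp add: K_def)
  show "prob_T_ge mode n N tb (nat \<lceil>2 * exp 1 ^ 2 * (1 + \<delta>) / (exp 1 - 1) * real n * ln (real n)\<rceil>)
      \<le> 2 * real n powr (- \<delta>)"
  proof (cases "n = 1")
    case True
    then show ?thesis by (simp add: prob_T_ge_def)
  next
    case False
    then have "2 \<le> n" using n_pos by simp
    from failure_bound_le[OF this \<open>\<delta> \<ge> 0\<close> K] prob_T_ge_le show ?thesis unfolding m by (meson order_trans)
  qed
qed

end
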